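(* A mixed graph $G=(V,D,B)$ is HTC-infinite-to-one if and only if the maximum flow in the network $G_{\mathrm{flow}}$ defined below has size strictly less than $|D|=\sum_{v\in V}|\mathrm{pa}(v)|$.
   Context: A mixed graph is $G=(V,D,B)$ with $V=[m]$, $D$ directed edges $v\to w$, $B$ symmetric bidirected edges $v\leftrightarrow w$, no self-loops. $\mathrm{pa}(v)=\{w:w\to v\in D\}$, $\mathrm{sib}(v)=\{w:w\leftrightarrow v\in B\}$. A half-trek from $y$ to $w$ is a path $y\leftrightarrow w_0\to w_1\to\cdots\to w_r=w$ (left side $\{y\}$, right side $\{w_0,\dots,w_r\}$) or $y\to w_1\to\cdots\to w_r=w$, $r\ge0$ (left side $\{y\}$, right side $\{y,w_1,\dots,w_r\}$); nodes may repeat. A system of half-treks from $X$ to $Y$: half-treks with distinct sources forming $X$ and distinct targets forming $Y$; no sided intersection: pairwise disjoint left sides and pairwise disjoint right sides. $Y$ satisfies the half-trek criterion w.r.t. $v$ if $|Y|=|\mathrm{pa}(v)|$, $Y\cap(\{v\}\cup\mathrm{sib}(v))=\emptyset$, and there is a system of half-treks with no sided intersection from $Y$ to $\mathrm{pa}(v)$. $G$ is HTC-infinite-to-one if every family $(Y_v:v\in V)$ of subsets of $V$ either contains some $Y_v$ that fails the half-trek criterion w.r.t. $v$ or contains a pair $Y_v,Y_w$ with $v\in Y_w$ and $w\in Y_v$. Flows: in a directed graph with source $s$, sink $t$, node and edge capacities, a flow is a nonnegative edge function respecting edge capacities and, at each node $x\neq s,t$, conservation $\sum_u f(u,x)=\sum_w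 f(x,w)$ with this value at most the node capacity; its size is the total flow out of $s$. The network $G_{\mathrm{flow}}$ has nodes $s,t$, a node $L\{v,w\}$ for each unordered pair of distinct $v,w\in V$ with $v\leftrightarrow w\notin B$, and a node $R_v(w)$ for each $(v,w)\in V\times V$. Its edges are: $s\to L\{v,w\}$, $L\{v,w\}\to R_v(w)$ (and, by symmetry of the unordered pair, $L\{v,w\}\to R_w(v)$) for each such pair; $L\{v,w\}\to R_v(u)$ for all $v\ne w$ with $v\leftrightarrow w\notin B$ and $w\leftrightarrow u\in B$; $R_v(w)\to R_v(u)$ for all $v\in V$ and $w\to u\in D$; and $R_v(w)\to t$ for all $v\in V$, $w\in\mathrm{pa}(v)$. All edges and the nodes $s,t$ have capacity $\infty$; all other nodes have capacity $1$. *)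

theory Defs
  imports Complex_Main
begin

text \<open>Mixed graph on V = {0..<m} (a relabelling of [m]) with directed edges D
  (pairs (v,w) meaning v -> w) and bidirected edges B (symmetric).\<close>

definition mixed_graph :: "nat \<Rightarrow> (nat \<times> nat) set \<Rightarrow> (nat \<times> nat) set \<Rightarrow> bool" where
  "mixed_graph m D B \<longleftrightarrow>
     D \<subseteq> {..<m} \<times> {..<m} \<and> B \<subseteq> {..<m} \<times> {..<m} \<and> sym B \<and>
     (\<forall>v. (v, v) \<notin> D) \<and> (\<forall>v. (v, v) \<notin> B)"

definition pa :: "(nat \<times> nat) set \<Rightarrow> nat \<Rightarrow> nat set" where
  "pa D v = {w. (w, v) \<in> D}"

definition sib :: "(nat \<times> nat) set \<Rightarrow> nat \<Rightarrow> nat set" where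
  "sib B v = {w. (w, v) \<in> B}"

text \<open>A half-trek is encoded as (b, y, p): y is the source, p = [w_0,...,w_r] is a
  directed walk (nodes may repeat). If b, the half-trek is y <-> w_0 -> ... -> w_r;
  otherwise w_0 = y and it is y -> w_1 -> ... -> w_r.\<close>

type_synonym half_trek = "bool \<times> nat \<times> nat list"

definition is_half_trek :: "(nat \<times> nat) set \<Rightarrow> (nat \<times> nat) set \<Rightarrow> half_trek \<Rightarrow> bool" where
  "is_half_trek D B h \<longleftrightarrow> (case h of (b, y, p) \<Rightarrow>
     p \<noteq> [] \<and> successively (\<lambda>a c. (a, c) \<in> D) p \<and>
     (if b then (y, hd p) \<in> B else hd p = y))"

definition ht_source :: "half_trek \<Rightarrow> nat" where
  "ht_source h = fst (snd h)"

definition ht_target :: "half_trek \<Rightarrow> nat" where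
  "ht_target h = last (snd (snd h))"

definition ht_left :: "half_trek \<Rightarrow> nat set" where
  "ht_left h = {fst (snd h)}"

definition ht_right :: "half_trek \<Rightarrow> nat set" where
  "ht_right h = set (snd (snd h))"

definition ht_system_no_sided :: "(nat \<times> nat) set \<Rightarrow> (nat \<times> nat) set \<Rightarrow> nat set \<Rightarrow> nat set \<Rightarrow> bool" where
  "ht_system_no_sided D B X Y \<longleftrightarrow> (\<exists>hs :: half_trek list.
     (\<forall>h \<in> set hs. is_half_trek D B h) \<and>
     distinct (map ht_source hs) \<and> distinct (map ht_target hs) \<and>
     set (map ht_source hs) = X \<and> set (map ht_target hs) = Y \<and>
     (\<forall>i < length hs. \<forall>j < length hs. i \<noteq> j \<longrightarrow>
        ht_left (hs ! i) \<inter> ht_left (hs ! j) = {} \<and>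
        ht_right (hs ! i) \<inter> ht_right (hs ! j) = {}))"

definition HTC :: "(nat \<times> nat) set \<Rightarrow> (nat \<times> nat) set \<Rightarrow> nat set \<Rightarrow> nat \<Rightarrow> bool" where
  "HTC D B Y v \<longleftrightarrow> card Y = card (pa D v) \<and> Y \<inter> ({v} \<union> sib B v) = {} \<and>
     ht_system_no_sided D B Y (pa D v)"

definition HTC_infinite_to_one :: "nat \<Rightarrow> (nat \<times> nat) set \<Rightarrow> (nat \<times> nat) set \<Rightarrow> bool" where
  "HTC_infinite_to_one m D B \<longleftrightarrow>
     (\<forall>Yf :: nat \<Rightarrow> nat set. (\<forall>v < m. Yf v \<subseteq> {..<m}) \<longrightarrow>
        (\<exists>v < m. \<not> HTC D B (Yf v) v) \<or>
        (\<exists>v < m. \<exists>w < m. v \<noteq> w \<and> v \<in> Yf w \<and> w \<in> Yf v))"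

text \<open>The flow network G_flow.  L-nodes are indexed by the unordered pair {v,w}.\<close>
datatype fnode = Src | Snk | Lnd "nat set" | Rnd nat nat

definition flow_nodes :: "nat \<Rightarrow> (nat \<times> nat) set \<Rightarrow> fnode set" where
  "flow_nodes m B = {Src, Snk} \<union>
     {Lnd {v, w} | v w. v < m \<and> w < m \<and> v \<noteq> w \<and> (v, w) \<notin> B} \<union>
     {Rnd v w | v w. v < m \<and> w < m}"

definition flow_edges :: "nat \<Rightarrow> (nat \<times> nat) set \<Rightarrow> (nat \<times> nat) set \<Rightarrow> (fnode \<times> fnode) set" where
  "flow_edges m D B =
     {(Src, Lnd {v, w}) | v w. v < m \<and> w < m \<and> v \<noteq> w \<and> (v, w) \<notin> B} \<union>
     {(Lnd {v, w}, Rnd v w) | v w. v < m \<and> w < m \<and> v \<noteq> w \<and> (v, w) \<notin> B} \<union>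
     {(Lnd {v, w}, Rnd v u) | v w u. v < m \<and> w < m \<and> v \<noteq> w \<and> (v, w) \<notin> B \<and> (w, u) \<in> B} \<union>
     {(Rnd v w, Rnd v u) | v w u. v < m \<and> (w, u) \<in> D} \<union>
     {(Rnd v w, Snk) | v w. v < m \<and> w \<in> pa D v}"

text \<open>A flow: nonnegative, supported on the edges (edge capacities are infinite),
  conservation at every node other than s,t, with throughput at most the node capacity 1.\<close>
definition is_flow :: "nat \<Rightarrow> (nat \<times> nat) set \<Rightarrow> (nat \<times> nat) set \<Rightarrow> (fnode \<times> fnode \<Rightarrow> real) \<Rightarrow> bool" where
  "is_flow m D B f \<longleftrightarrow>
     (\<forall>e. 0 \<le> f e) \<and> (\<forall>e. e \<notin> flow_edges m D B \<longrightarrow> f e = 0) \<and>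
     (\<forall>x \<in> flow_nodes m B - {Src, Snk}.
        (\<Sum>u \<in> flow_nodes m B. f (u, x)) = (\<Sum>w \<in> flow_nodes m B. f (x, w)) \<and>
        (\<Sum>u \<in> flow_nodes m B. f (u, x)) \<le> 1)"

definition flow_size :: "nat \<Rightarrow> (nat \<times> nat) set \<Rightarrow> (fnode \<times> fnode \<Rightarrow> real) \<Rightarrow> real" where
  "flow_size m B f = (\<Sum>w \<in> flow_nodes m B. f (Src, w))"

definition max_flow :: "nat \<Rightarrow> (nat \<times> nat) set \<Rightarrow> (nat \<times> nat) set \<Rightarrow> real" where
  "max_flow m D B = Sup {flow_size m B f | f. is_flow m D B f}"

end

theory Submission
  imports Defs "HOL-Library.Transitive_Closure_Table"
begin

text \<open>
  The equivalence is a Menger-type argument, proved in three layers.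

  First, for arbitrary finite networks with unbounded arcs and unit capacities on a set U of
  arcs, the Ford-Fulkerson augmenting-path method shows that every flow is dominated by an
  integral flow, and an integral flow of value k decomposes into k simple source-sink paths.
  Node capacities are reduced to arc capacities by splitting every inner node.

  Second, in the network G_flow these facts show that the maximal flow is at least k if and
  only if there are k source-sink paths that pairwise share no node except the sink
  (lemma max_flow_paths).

  Third, every source-sink path of G_flow has the shape s, L{v,y}, R_v(w_0), ..., R_v(w_r), t,
  i.e. it is a half-trek from y to a parent w_r of v drawn in the layer of v.  A family of
  |D| internally disjoint paths covers every edge w_r -> v exactly once, and its paths in layer
  v form a half-trek system from Y_v to pa(v) with no sided intersection; disjointness at the
  L-nodes rules out pairs v in Y_w, w in Y_v (lemma family_of_paths).  Conversely, the
  half-treks of a family satisfying the criterion, shortcut to simple walks, give |D| such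
  paths (lemma paths_of_family).
\<close>

definition inflow :: "'v set \<Rightarrow> ('v \<times> 'v \<Rightarrow> real) \<Rightarrow> 'v \<Rightarrow> real" where
  "inflow V f x = (\<Sum>u\<in>V. f (u, x))"

definition outflow :: "'v set \<Rightarrow> ('v \<times> 'v \<Rightarrow> real) \<Rightarrow> 'v \<Rightarrow> real" where
  "outflow V f x = (\<Sum>w\<in>V. f (x, w))"

definition st_flow :: "'v set \<Rightarrow> ('v \<times> 'v) set \<Rightarrow> 'v \<Rightarrow> 'v \<Rightarrow> ('v \<times> 'v \<Rightarrow> real) \<Rightarrow> bool" where
  "st_flow V A s t f \<longleftrightarrow> (\<forall>a. 0 \<le> f a) \<and> (\<forall>a. a \<notin> A \<longrightarrow> f a = 0) \<and>
     (\<forall>x\<in>V - {s, t}. inflow V f x = outflow V f x)"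

definition flow_value :: "'v set \<Rightarrow> 'v \<Rightarrow> ('v \<times> 'v \<Rightarrow> real) \<Rightarrow> real" where
  "flow_value V s f = outflow V f s - inflow V f s"

lemma st_flow_nonneg: "st_flow V A s t f \<Longrightarrow> 0 \<le> f a"
  unfolding st_flow_def by blast

lemma st_flow_outside: "st_flow V A s t f \<Longrightarrow> a \<notin> A \<Longrightarrow> f a = 0"
  unfolding st_flow_def by blast

lemma st_flow_zero: "st_flow V A s t (\<lambda>_. 0)"
  by (simp add: st_flow_def inflow_def outflow_def)

lemma flow_value_zero: "flow_value V s (\<lambda>_. 0) = 0"
  by (simp add: flow_value_def inflow_def outflow_def)

lemma inflow_add: "inflow V (\<lambda>a. g a + h a) x = inflow V g x + inflow V h x"
  and outflow_add: "outflow V (\<lambda>a. g a + h a) x = outflow V g x + outflow V h x"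
  and inflow_diff: "inflow V (\<lambda>a. g a - h a) x = inflow V g x - inflow V h x"
  and outflow_diff: "outflow V (\<lambda>a. g a - h a) x = outflow V g x - outflow V h x"
  by (simp_all add: inflow_def outflow_def sum.distrib sum_subtractf)

lemma inflow_sum: "inflow V (\<lambda>a. \<Sum>i\<in>S. h i a) x = (\<Sum>i\<in>S. inflow V (h i) x)"
  and outflow_sum: "outflow V (\<lambda>a. \<Sum>i\<in>S. h i a) x = (\<Sum>i\<in>S. outflow V (h i) x)"
  unfolding inflow_def outflow_def by (rule sum.swap)+

lemma inflow_sum_list: "inflow V (\<lambda>a. \<Sum>ys\<leftarrow>Ps. h ys a) x = (\<Sum>ys\<leftarrow>Ps. inflow V (h ys) x)"
  by (induction Ps) (simp_all add: inflow_add, simp add: inflow_def)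

lemma int_pos_ge1: "(x::real) \<in> \<int> \<Longrightarrow> 0 < x \<Longrightarrow> 1 \<le> x"
  by (auto elim!: Ints_cases)

lemma int_lt1: "(x::real) \<in> \<int> \<Longrightarrow> 0 \<le> x \<Longrightarrow> x < 1 \<Longrightarrow> x = 0"
  by (auto elim!: Ints_cases)

text \<open>Each step x -> y is used forwards on the
  arc (x, y) if fwd x y holds, and backwards (cancelling flow on (y, x)) otherwise; the
  backward steps are needed for augmenting paths.\<close>

definition arc_step :: "('v \<Rightarrow> 'v \<Rightarrow> bool) \<Rightarrow> 'v \<Rightarrow> 'v \<Rightarrow> 'v \<times> 'v \<Rightarrow> real" where
  "arc_step fwd x y a = (if fwd x y then (if a = (x, y) then 1 else 0) else (if a = (y, x) then -1 else 0))"

fun walk_flow :: "('v \<Rightarrow> 'v \<Rightarrow> bool) \<Rightarrow> 'v \<Rightarrow> 'v list \<Rightarrow> 'v \<times> 'v \<Rightarrow> real" where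
  "walk_flow fwd x [] a = 0"
| "walk_flow fwd x (y # ys) a = arc_step fwd x y a + walk_flow fwd y ys a"

abbreviation along :: "'v \<Rightarrow> 'v \<Rightarrow> bool" where
  "along \<equiv> \<lambda>_ _. True"

lemma outflow_arc_step:
  assumes "finite V" "x \<in> V" "y \<in> V"
  shows "outflow V (arc_step fwd x y) v = (if fwd x y then (if v = x then 1 else 0) else (if v = y then -1 else 0))"
proof -
  have "outflow V (arc_step fwd x y) v =
      (\<Sum>w\<in>V. if w = (if fwd x y then y else x) then (if fwd x y then (if v = x then 1 else 0) else (if v = y then -1 else 0)) else 0)"
    unfolding outflow_def arc_step_def by (intro sum.cong) auto
  then show ?thesis using assms by simp
qed

lemma inflow_arc_step:
  assumes "finite V" "x \<in> V" "y \<in> V"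
  shows "inflow V (arc_step fwd x y) v = (if fwd x y then (if v = y then 1 else 0) else (if v = x then -1 else 0))"
proof -
  have "inflow V (arc_step fwd x y) v =
      (\<Sum>w\<in>V. if w = (if fwd x y then x else y) then (if fwd x y then (if v = y then 1 else 0) else (if v = x then -1 else 0)) else 0)"
    unfolding inflow_def arc_step_def by (intro sum.cong) auto
  then show ?thesis using assms by simp
qed

lemma walk_flow_balance:
  assumes "finite V" "x \<in> V" "set ys \<subseteq> V"
  shows "outflow V (walk_flow fwd x ys) v - inflow V (walk_flow fwd x ys) v
         = (if v = x then 1 else 0) - (if v = last (x # ys) then 1 else 0)"
  using assms(2,3)
proof (induction ys arbitrary: x)
  case Nil
  then show ?case by (simp add: outflow_def inflow_def)
next
  case (Cons y ys)
  have "outflow V (walk_flow fwd x (y # ys)) v - inflow V (walk_flow fwd x (y # ys)) v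
     = (outflow V (arc_step fwd x y) v - inflow V (arc_step fwd x y) v)
       + (outflow V (walk_flow fwd y ys) v - inflow V (walk_flow fwd y ys) v)"
    by (simp add: outflow_def inflow_def sum.distrib)
  then show ?case
    using Cons outflow_arc_step[OF assms(1) Cons(2), of y fwd v] inflow_arc_step[OF assms(1) Cons(2), of y fwd v]
    by (auto simp del: walk_flow.simps)
qed

lemma walk_flow_values:
  assumes "rtrancl_path r x ys z" "distinct (x # ys)"
  shows "(walk_flow fwd x ys a \<noteq> 0 \<longrightarrow> fst a \<in> set (x # ys) \<and> snd a \<in> set (x # ys)) \<and>
         (walk_flow fwd x ys a = 0 \<or> (walk_flow fwd x ys a = 1 \<and> r (fst a) (snd a) \<and> fwd (fst a) (snd a)) \<or>
          (walk_flow fwd x ys a = -1 \<and> r (snd a) (fst a) \<and> \<not> fwd (snd a) (fst a)))"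
  using assms
proof (induction arbitrary: a rule: rtrancl_path.induct)
  case (base x)
  then show ?case by simp
next
  case (step x y ys z)
  have d: "distinct (y # ys)" "x \<notin> set (y # ys)" using step.prems by auto
  note IH = step.IH[OF d(1), of a]
  show ?case
  proof (cases "a = (x, y) \<or> a = (y, x)")
    case True
    then have "walk_flow fwd y ys a = 0" using IH d(2) by auto
    then show ?thesis using True step.hyps(1) d by (auto simp: arc_step_def)
  next
    case False
    then have "arc_step fwd x y a = 0" by (auto simp: arc_step_def)
    then show ?thesis using IH by auto
  qed
qed

lemma inflow_forward_walk:
  assumes "finite V" "x \<in> V" "set ys \<subseteq> V" "distinct (x # ys)"
  shows "inflow V (walk_flow along x ys) v = (if v \<in> set ys then 1 else 0)"
  using assms(2-4)
proof (induction ys arbitrary: x)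
  case Nil
  then show ?case by (simp add: inflow_def)
next
  case (Cons y ys)
  have "inflow V (walk_flow along x (y # ys)) v = inflow V (arc_step along x y) v + inflow V (walk_flow along y ys) v"
    by (simp add: inflow_def sum.distrib)
  then show ?case using Cons inflow_arc_step[OF assms(1) Cons(2), of y along v] by (auto simp del: walk_flow.simps)
qed

lemma rtrancl_path_last_cons: "rtrancl_path r x ys z \<Longrightarrow> last (x # ys) = z"
  by (cases ys) (auto dest: rtrancl_path_last elim: rtrancl_path.cases)

lemma rtrancl_path_set:
  assumes "rtrancl_path r x ys z" "\<And>a b. r a b \<Longrightarrow> b \<in> V"
  shows "set ys \<subseteq> V"
  using rtrancl_path_Range[OF assms(1)] assms(2) by blast

lemma walk_flow_st_balance:
  assumes "finite V" "s \<in> V" "rtrancl_path r s ys t" "set ys \<subseteq> V"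
  shows "outflow V (walk_flow fwd s ys) x - inflow V (walk_flow fwd s ys) x
         = (if x = s then 1 else 0) - (if x = t then 1 else 0)"
  using walk_flow_balance[OF assms(1,2,4)] rtrancl_path_last_cons[OF assms(3)] by simp

lemma flow_value_cut:
  assumes "finite V" "st_flow V A s t f" "R \<subseteq> V" "s \<in> R" "t \<notin> R"
  shows "flow_value V s f = (\<Sum>a\<in>R \<times> (V - R). f a) - (\<Sum>a\<in>(V - R) \<times> R. f a)"
proof -
  have fR: "finite R" using assms(1,3) finite_subset by blast
  have balanced: "outflow V f x - inflow V f x = 0" if "x \<in> R - {s}" for x
  proof -
    have "x \<in> V - {s, t}" using that assms(3,5) by auto
    then show ?thesis using assms(2) unfolding st_flow_def by auto
  qed
  have "(\<Sum>x\<in>R. outflow V f x - inflow V f x) = outflow V f s - inflow V f s + (\<Sum>x\<in>R-{s}. outflow V f x - inflow V f x)"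
    using fR assms(4) by (simp add: sum.remove)
  also have "\<dots> = flow_value V s f" using balanced by (simp add: flow_value_def)
  finally have net: "(\<Sum>x\<in>R. outflow V f x - inflow V f x) = flow_value V s f" .
  have out: "(\<Sum>x\<in>R. outflow V f x) = (\<Sum>a\<in>R \<times> V. f a)"
    unfolding outflow_def by (simp add: sum.cartesian_product)
  have "(\<Sum>x\<in>R. inflow V f x) = (\<Sum>u\<in>V. \<Sum>x\<in>R. f (u, x))"
    unfolding inflow_def by (rule sum.swap)
  then have "in": "(\<Sum>x\<in>R. inflow V f x) = (\<Sum>a\<in>V \<times> R. f a)" by (simp add: sum.cartesian_product)
  have RV: "R \<times> V = R \<times> R \<union> R \<times> (V - R)" "V \<times> R = R \<times> R \<union> (V - R) \<times> R"
    using assms(3) by auto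
  have "(\<Sum>a\<in>R \<times> V. f a) = (\<Sum>a\<in>R \<times> R. f a) + (\<Sum>a\<in>R \<times> (V - R). f a)"
    unfolding RV(1) by (rule sum.union_disjoint) (use fR assms(1) in auto)
  moreover have "(\<Sum>a\<in>V \<times> R. f a) = (\<Sum>a\<in>R \<times> R. f a) + (\<Sum>a\<in>(V - R) \<times> R. f a)"
    unfolding RV(2) by (rule sum.union_disjoint) (use fR assms(1) in auto)
  ultimately show ?thesis using net out "in" by (simp add: sum_subtractf)
qed

text \<open>A flow of positive value contains a simple source-sink path of arcs with positive flow;
  otherwise the nodes reachable along such arcs would form a cut of net flow zero.\<close>

lemma positive_flow_path:
  assumes "finite V" "s \<in> V" "st_flow V A s t f" "flow_value V s f > 0"
  shows "\<exists>ys. rtrancl_path (\<lambda>x y. (x, y) \<in> A \<and> f (x, y) > 0) s ys t \<and> distinct (s # ys)"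
proof -
  let ?r = "\<lambda>x y. (x, y) \<in> A \<and> f (x, y) > 0"
  show ?thesis
  proof (cases "?r\<^sup>*\<^sup>* s t")
    case True
    then obtain xs where "rtrancl_path ?r s xs t" unfolding rtranclp_eq_rtrancl_path by blast
    then obtain xs' where "rtrancl_path ?r s xs' t" "distinct (s # xs')"
      by (rule rtrancl_path_distinct)
    then show ?thesis by blast
  next
    case False
    define R where "R = {x\<in>V. ?r\<^sup>*\<^sup>* s x}"
    have R: "R \<subseteq> V" "s \<in> R" "t \<notin> R" using False assms(2) by (auto simp: R_def)
    have leaving: "f a = 0" if a: "a \<in> R \<times> (V - R)" for a
    proof (rule ccontr)
      assume "f a \<noteq> 0"
      then have "?r (fst a) (snd a)" using assms(3) unfolding st_flow_def by (metis less_eq_real_def prod.collapse)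
      with a have "?r\<^sup>*\<^sup>* s (fst a)" "?r (fst a) (snd a)" by (auto simp: R_def)
      then have "?r\<^sup>*\<^sup>* s (snd a)" by (rule rtranclp.rtrancl_into_rtrancl)
      then show False using a by (auto simp: R_def)
    qed
    have "(\<Sum>a\<in>(V - R) \<times> R. f a) \<ge> 0" using st_flow_nonneg[OF assms(3)] by (intro sum_nonneg) auto
    then have "flow_value V s f \<le> 0" using flow_value_cut[OF assms(1,3) R] leaving by simp
    then show ?thesis using assms(4) by simp
  qed
qed

lemma peel_path:
  assumes "finite V" "A \<subseteq> V \<times> V" "s \<in> V" "s \<noteq> t"
    and g: "st_flow V A s t g" "\<forall>a. g a \<in> \<int>" "flow_value V s g > 0"
  defines "g' \<equiv> \<lambda>ys a. g a - walk_flow along s ys a"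
  shows "\<exists>ys. rtrancl_path (\<lambda>x y. (x, y) \<in> A) s ys t \<and> distinct (s # ys) \<and>
    st_flow V A s t (g' ys) \<and> (\<forall>a. g' ys a \<in> \<int>) \<and> flow_value V s (g' ys) = flow_value V s g - 1"
proof -
  obtain ys where p: "rtrancl_path (\<lambda>x y. (x, y) \<in> A \<and> g (x, y) > 0) s ys t" "distinct (s # ys)"
    using positive_flow_path[OF assms(1,3) g(1,3)] by blast
  define h where "h = walk_flow along s ys"
  have pA: "rtrancl_path (\<lambda>x y. (x, y) \<in> A) s ys t" by (rule rtrancl_path_mono[OF p(1)]) auto
  have Vys: "set ys \<subseteq> V" using rtrancl_path_set[OF pA] assms(2) by auto
  have h_vals: "h a = 0 \<or> (h a = 1 \<and> a \<in> A \<and> g a > 0)" for a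
    using walk_flow_values[OF p, of along a] unfolding h_def by (cases a) auto
  have h_le: "h a \<le> g a" for a
    using h_vals[of a] int_pos_ge1[of "g a"] g(2) st_flow_nonneg[OF g(1), of a] by auto
  have balance: "outflow V h x - inflow V h x = (if x = s then 1 else 0) - (if x = t then 1 else 0)" for x
    unfolding h_def by (rule walk_flow_st_balance[OF assms(1,3) pA Vys])
  have "st_flow V A s t (g' ys)"
    unfolding st_flow_def
  proof (intro conjI allI ballI impI)
    fix a show "0 \<le> g' ys a" using h_le[of a] by (simp add: g'_def h_def)
  next
    fix a assume "a \<notin> A" then show "g' ys a = 0"
      using h_vals[of a] st_flow_outside[OF g(1)] by (auto simp: g'_def h_def)
  next
    fix x assume x: "x \<in> V - {s, t}"
    then have "inflow V g x = outflow V g x" using g(1) by (auto simp: st_flow_def)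
    then show "inflow V (g' ys) x = outflow V (g' ys) x"
      using balance[of x] x unfolding g'_def inflow_diff outflow_diff h_def by auto
  qed
  moreover have "\<forall>a. g' ys a \<in> \<int>" using g(2) h_vals unfolding g'_def h_def by (metis Ints_0 Ints_1 Ints_diff)
  moreover have "flow_value V s (g' ys) = flow_value V s g - 1"
    using balance[of s] assms(4) unfolding flow_value_def g'_def inflow_diff outflow_diff h_def by auto
  ultimately show ?thesis using pA p(2) by (intro exI[of _ ys]) simp
qed

lemma flow_path_decomposition:
  assumes "finite V" "A \<subseteq> V \<times> V" "s \<in> V" "s \<noteq> t"
  shows "st_flow V A s t g \<Longrightarrow> (\<forall>a. g a \<in> \<int>) \<Longrightarrow> real k \<le> flow_value V s g \<Longrightarrow>
    \<exists>Ps. length Ps = k \<and> (\<forall>ys\<in>set Ps. rtrancl_path (\<lambda>x y. (x, y) \<in> A) s ys t \<and> distinct (s # ys)) \<and>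
         (\<forall>a. (\<Sum>ys\<leftarrow>Ps. walk_flow along s ys a) \<le> g a)"
proof (induction k arbitrary: g)
  case 0
  then show ?case by (intro exI[of _ "[]"]) (auto simp: st_flow_def)
next
  case (Suc k)
  obtain ys where ys: "rtrancl_path (\<lambda>x y. (x, y) \<in> A) s ys t" "distinct (s # ys)"
    and rest: "st_flow V A s t (\<lambda>a. g a - walk_flow along s ys a)"
      "\<forall>a. g a - walk_flow along s ys a \<in> \<int>"
      "flow_value V s (\<lambda>a. g a - walk_flow along s ys a) = flow_value V s g - 1"
    using peel_path[OF assms Suc.prems(1,2)] Suc.prems(3) by (auto simp del: walk_flow.simps)
  have "real k \<le> flow_value V s (\<lambda>a. g a - walk_flow along s ys a)" using rest(3) Suc.prems(3) by simp
  from Suc.IH[OF rest(1,2) this] obtain Ps where Ps: "length Ps = k"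
    "\<forall>ys\<in>set Ps. rtrancl_path (\<lambda>x y. (x, y) \<in> A) s ys t \<and> distinct (s # ys)"
    "\<forall>a. (\<Sum>ys\<leftarrow>Ps. walk_flow along s ys a) \<le> g a - walk_flow along s ys a" by blast
  have "(\<Sum>zs\<leftarrow>ys # Ps. walk_flow along s zs a) \<le> g a" for a
    using Ps(3)[rule_format, of a] by (simp del: walk_flow.simps)
  then show ?case using Ps(1,2) ys by (intro exI[of _ "ys # Ps"]) auto
qed

lemma decomposition_node_once:
  assumes "finite V" "s \<in> V"
    and paths: "\<forall>ys\<in>set Ps. distinct (s # ys) \<and> set ys \<subseteq> V"
    and below: "\<forall>a. (\<Sum>ys\<leftarrow>Ps. walk_flow along s ys a) \<le> g a" and cap: "inflow V g x \<le> 1"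
    and ij: "i < length Ps" "j < length Ps" "x \<in> set (Ps ! i)" "x \<in> set (Ps ! j)"
  shows "i = j"
proof (rule ccontr)
  assume "i \<noteq> j"
  have "inflow V (\<lambda>a. \<Sum>ys\<leftarrow>Ps. walk_flow along s ys a) x \<le> inflow V g x"
    unfolding inflow_def using below by (intro sum_mono) blast
  moreover have "inflow V (\<lambda>a. \<Sum>ys\<leftarrow>Ps. walk_flow along s ys a) x
      = (\<Sum>ys\<leftarrow>Ps. inflow V (walk_flow along s ys) x)"
    by (rule inflow_sum_list)
  moreover have "\<dots> = (\<Sum>ys\<leftarrow>Ps. if x \<in> set ys then 1 else 0)"
    using inflow_forward_walk[OF assms(1,2)] paths by (intro arg_cong[where f = sum_list] map_cong) auto
  moreover have "\<dots> = (\<Sum>l = 0..<length Ps. if x \<in> set (Ps ! l) then 1 else 0)"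
    by (simp add: sum_list_sum_nth)
  moreover have "(\<Sum>l\<in>{i, j}. if x \<in> set (Ps ! l) then 1 else (0::real))
      \<le> (\<Sum>l = 0..<length Ps. if x \<in> set (Ps ! l) then 1 else 0)"
    by (rule sum_mono2) (use ij in auto)
  ultimately show False using ij \<open>i \<noteq> j\<close> cap by simp
qed

lemma path_sum_flow:
  assumes "finite V" "A \<subseteq> V \<times> V" "s \<in> V" "s \<noteq> t" "finite P"
    and P: "\<And>ys. ys \<in> P \<Longrightarrow> rtrancl_path (\<lambda>x y. (x, y) \<in> A) s ys t \<and> distinct (s # ys)"
  defines "f \<equiv> \<lambda>a. \<Sum>ys\<in>P. walk_flow along s ys a"
  shows "st_flow V A s t f" "flow_value V s f = real (card P)"
    and "inflow V f x = real (card {ys \<in> P. x \<in> set ys})"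
proof -
  have Vys: "set ys \<subseteq> V" if "ys \<in> P" for ys
    using rtrancl_path_set[OF conjunct1[OF P[OF that]]] assms(2) by blast
  have vals: "walk_flow along s ys a = 0 \<or> (walk_flow along s ys a = 1 \<and> a \<in> A)" if "ys \<in> P" for ys a
    using walk_flow_values[OF conjunct1[OF P[OF that]] conjunct2[OF P[OF that]], of along a]
    by (cases a) auto
  have balance: "outflow V (walk_flow along s ys) x - inflow V (walk_flow along s ys) x
      = (if x = s then 1 else 0) - (if x = t then 1 else 0)" if "ys \<in> P" for ys x
    using walk_flow_st_balance[OF assms(1,3) conjunct1[OF P[OF that]] Vys[OF that]] .
  have inflow_path: "inflow V (walk_flow along s ys) x = (if x \<in> set ys then 1 else 0)" if "ys \<in> P" for ys x
    using inflow_forward_walk[OF assms(1,3) Vys[OF that]] P[OF that] by blast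
  have net: "outflow V f x - inflow V f x = (\<Sum>ys\<in>P. (if x = s then 1 else 0) - (if x = t then 1 else 0))" for x
  proof -
    have "outflow V f x - inflow V f x
        = (\<Sum>ys\<in>P. outflow V (walk_flow along s ys) x - inflow V (walk_flow along s ys) x)"
      unfolding f_def by (simp add: inflow_sum outflow_sum sum_subtractf)
    also have "\<dots> = (\<Sum>ys\<in>P. (if x = s then 1 else 0) - (if x = t then 1 else 0))"
      using balance by (intro sum.cong) auto
    finally show ?thesis .
  qed
  show "st_flow V A s t f"
    unfolding st_flow_def
  proof (intro conjI allI impI ballI)
    fix a show "0 \<le> f a" unfolding f_def by (intro sum_nonneg) (metis vals order.refl zero_le_one)
  next
    fix a assume "a \<notin> A"
    then show "f a = 0" unfolding f_def using vals by (intro sum.neutral) blast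
  next
    fix x assume "x \<in> V - {s, t}"
    then show "inflow V f x = outflow V f x" using net[of x] by simp
  qed
  show "flow_value V s f = real (card P)" using net[of s] assms(4) by (simp add: flow_value_def)
  show "inflow V f x = real (card {ys \<in> P. x \<in> set ys})"
    unfolding f_def using assms(5) by (simp add: inflow_sum inflow_path flip: sum.inter_filter)
qed

text \<open>Augmenting paths for networks in which the arcs of U have capacity 1 and all other arcs are
  unbounded.\<close>

definition residual :: "('v \<times> 'v) set \<Rightarrow> ('v \<times> 'v) set \<Rightarrow> ('v \<times> 'v \<Rightarrow> real) \<Rightarrow> 'v \<Rightarrow> 'v \<Rightarrow> bool" where
  "residual A U g x y \<longleftrightarrow> ((x, y) \<in> A \<and> ((x, y) \<notin> U \<or> g (x, y) < 1)) \<or> ((y, x) \<in> A \<and> 0 < g (y, x))"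

definition residual_forward :: "('v \<times> 'v) set \<Rightarrow> ('v \<times> 'v) set \<Rightarrow> ('v \<times> 'v \<Rightarrow> real) \<Rightarrow> 'v \<Rightarrow> 'v \<Rightarrow> bool" where
  "residual_forward A U g x y \<longleftrightarrow> (x, y) \<in> A \<and> ((x, y) \<notin> U \<or> g (x, y) < 1)"

text \<open>If the sink is not reachable in the residual graph, the reachable nodes form a cut that
  every feasible flow crosses with at most the value of g.\<close>

lemma no_augmenting_path_maximal:
  assumes "finite V" "s \<in> V" "st_flow V A s t g" "\<forall>a\<in>U. g a \<le> 1" "\<not> (residual A U g)\<^sup>*\<^sup>* s t"
    "st_flow V A s t f" "\<forall>a\<in>U. f a \<le> 1"
  shows "flow_value V s f \<le> flow_value V s g"
proof -
  define R where "R = {x\<in>V. (residual A U g)\<^sup>*\<^sup>* s x}"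
  have R: "R \<subseteq> V" "s \<in> R" "t \<notin> R" using assms(2,5) by (auto simp: R_def)
  have not_residual: "\<not> residual A U g x y" if "x \<in> R" "y \<in> V" "y \<notin> R" for x y
  proof
    assume "residual A U g x y"
    moreover have "(residual A U g)\<^sup>*\<^sup>* s x" using that(1) by (simp add: R_def)
    ultimately have "(residual A U g)\<^sup>*\<^sup>* s y" by (metis rtranclp.rtrancl_into_rtrancl)
    then show False using that(2,3) by (simp add: R_def)
  qed
  have leaving: "f a \<le> g a" if a_cut: "a \<in> R \<times> (V - R)" for a
  proof -
    obtain x y where a: "a = (x, y)" "x \<in> R" "y \<in> V" "y \<notin> R" using a_cut by (cases a) auto
    have "\<not> ((x, y) \<in> A \<and> ((x, y) \<notin> U \<or> g (x, y) < 1))"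
      using not_residual[OF a(2-4)] by (simp add: residual_def)
    then show ?thesis using assms(3,4,6,7) a(1) unfolding st_flow_def by fastforce
  qed
  have entering: "g a = 0" if a_cut: "a \<in> (V - R) \<times> R" for a
  proof -
    obtain x y where a: "a = (y, x)" "x \<in> R" "y \<in> V" "y \<notin> R" using a_cut by (cases a) auto
    have "\<not> ((y, x) \<in> A \<and> 0 < g (y, x))" using not_residual[OF a(2-4)] by (simp add: residual_def)
    then show ?thesis using assms(3) a(1) unfolding st_flow_def by (metis less_eq_real_def)
  qed
  have "(\<Sum>a\<in>R \<times> (V - R). f a) \<le> (\<Sum>a\<in>R \<times> (V - R). g a)" by (rule sum_mono) (use leaving in auto)
  moreover have "(\<Sum>a\<in>(V - R) \<times> R. g a) = 0" using entering by simp
  moreover have "(\<Sum>a\<in>(V - R) \<times> R. f a) \<ge> 0" using st_flow_nonneg[OF assms(6)] by (intro sum_nonneg) auto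
  ultimately show ?thesis using flow_value_cut[OF assms(1,3) R] flow_value_cut[OF assms(1,6) R] by linarith
qed

lemma augmenting_path:
  assumes "finite V" "A \<subseteq> V \<times> V" "s \<in> V" "s \<noteq> t" "st_flow V A s t g" "\<forall>a\<in>U. g a \<le> 1"
    "\<forall>a. g a \<in> \<int>" "(residual A U g)\<^sup>*\<^sup>* s t"
  shows "\<exists>g'. st_flow V A s t g' \<and> (\<forall>a\<in>U. g' a \<le> 1) \<and> (\<forall>a. g' a \<in> \<int>) \<and>
    flow_value V s g' = flow_value V s g + 1"
proof -
  obtain xs where "rtrancl_path (residual A U g) s xs t"
    using assms(8) unfolding rtranclp_eq_rtrancl_path by blast
  then obtain ys where p: "rtrancl_path (residual A U g) s ys t" "distinct (s # ys)"
    by (rule rtrancl_path_distinct)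
  define h where "h = walk_flow (residual_forward A U g) s ys"
  have Vys: "set ys \<subseteq> V" using rtrancl_path_set[OF p(1), of V] assms(2) unfolding residual_def by auto
  have h_vals: "h a = 0 \<or> (h a = 1 \<and> a \<in> A \<and> (a \<notin> U \<or> g a < 1)) \<or> (h a = -1 \<and> a \<in> A \<and> g a > 0)" for a
    using walk_flow_values[OF p, of "residual_forward A U g" a] unfolding h_def
    by (cases a) (auto simp: residual_def residual_forward_def)
  have balance: "outflow V h x - inflow V h x = (if x = s then 1 else 0) - (if x = t then 1 else 0)" for x
    unfolding h_def by (rule walk_flow_st_balance[OF assms(1,3) p(1) Vys])
  have g_nonneg: "0 \<le> g a" for a using st_flow_nonneg[OF assms(5)] .
  define g' where "g' = (\<lambda>a. g a + h a)"
  have flow': "st_flow V A s t g'"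
    unfolding st_flow_def
  proof (intro conjI allI ballI impI)
    fix a show "0 \<le> g' a" using h_vals[of a] g_nonneg[of a] int_pos_ge1[of "g a"] assms(7) by (auto simp: g'_def)
  next
    fix a assume "a \<notin> A" then show "g' a = 0"
      using h_vals[of a] st_flow_outside[OF assms(5)] by (auto simp: g'_def)
  next
    fix x assume x: "x \<in> V - {s, t}"
    then have "inflow V g x = outflow V g x" using assms(5) by (auto simp: st_flow_def)
    then show "inflow V g' x = outflow V g' x" using balance[of x] x unfolding g'_def inflow_add outflow_add by auto
  qed
  have cap': "\<forall>a\<in>U. g' a \<le> 1"
  proof
    fix a assume "a \<in> U"
    moreover have "g a \<in> \<int>" using assms(7) by blast
    ultimately show "g' a \<le> 1" using h_vals[of a] assms(6) int_lt1[of "g a"] g_nonneg[of a] by (auto simp: g'_def)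
  qed
  have int': "\<forall>a. g' a \<in> \<int>" using assms(7) h_vals unfolding g'_def
    by (metis Ints_0 Ints_1 Ints_add Ints_minus)
  have "flow_value V s g' = flow_value V s g + 1"
    using balance[of s] assms(4) unfolding flow_value_def g'_def inflow_add outflow_add by auto
  then show ?thesis using flow' cap' int' by blast
qed

text \<open>The integrality theorem: every feasible flow is dominated in value by an integral feasible
  flow. Augment at most the ceiling of its value many times, starting from the zero flow.\<close>

lemma integral_flow_exists:
  assumes "finite V" "A \<subseteq> V \<times> V" "s \<in> V" "s \<noteq> t" "st_flow V A s t f" "\<forall>a\<in>U. f a \<le> 1"
  shows "\<exists>g. st_flow V A s t g \<and> (\<forall>a\<in>U. g a \<le> 1) \<and> (\<forall>a. g a \<in> \<int>) \<and> flow_value V s f \<le> flow_value V s g"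
proof -
  have "\<exists>g. st_flow V A s t g \<and> (\<forall>a\<in>U. g a \<le> 1) \<and> (\<forall>a. g a \<in> \<int>) \<and>
      min (real n) (flow_value V s f) \<le> flow_value V s g" for n
  proof (induction n)
    case 0
    show ?case by (intro exI[of _ "\<lambda>_. 0"]) (simp add: st_flow_zero flow_value_zero)
  next
    case (Suc n)
    then obtain g where g: "st_flow V A s t g" "\<forall>a\<in>U. g a \<le> 1" "\<forall>a. g a \<in> \<int>"
      "min (real n) (flow_value V s f) \<le> flow_value V s g" by blast
    show ?case
    proof (cases "flow_value V s f \<le> flow_value V s g")
      case True
      then show ?thesis using g by (intro exI[of _ g]) auto
    next
      case False
      then have "(residual A U g)\<^sup>*\<^sup>* s t"
        using no_augmenting_path_maximal[OF assms(1,3) g(1,2) _ assms(5,6)] by blast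
      from augmenting_path[OF assms(1-4) g(1-3) this] obtain g' where
        "st_flow V A s t g'" "\<forall>a\<in>U. g' a \<le> 1" "\<forall>a. g' a \<in> \<int>" "flow_value V s g' = flow_value V s g + 1"
        by blast
      then show ?thesis using g(4) by (intro exI[of _ g']) auto
    qed
  qed
  from this[of "nat \<lceil>flow_value V s f\<rceil>"] show ?thesis
    by (metis min.absorb2 of_nat_ceiling)
qed

text \<open>Splitting each node x into an in-copy (x, False) and an out-copy (x, True), joined by an arc
  of capacity 1 for inner nodes, reduces node capacities to arc capacities.\<close>

definition node_cap_flow :: "'v set \<Rightarrow> ('v \<times> 'v) set \<Rightarrow> 'v \<Rightarrow> 'v \<Rightarrow> ('v \<times> 'v \<Rightarrow> real) \<Rightarrow> bool" where
  "node_cap_flow N E s t f \<longleftrightarrow> st_flow N E s t f \<and> (\<forall>x\<in>N - {s, t}. inflow N f x \<le> 1)"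

definition split_nodes :: "'v set \<Rightarrow> ('v \<times> bool) set" where
  "split_nodes N = N \<times> UNIV"

definition split_arcs :: "('v \<times> 'v) set \<Rightarrow> 'v set \<Rightarrow> (('v \<times> bool) \<times> ('v \<times> bool)) set" where
  "split_arcs E I = {((x, True), (y, False)) | x y. (x, y) \<in> E} \<union> {((x, False), (x, True)) | x. x \<in> I}"

definition split_cap_arcs :: "'v set \<Rightarrow> (('v \<times> bool) \<times> ('v \<times> bool)) set" where
  "split_cap_arcs I = {((x, False), (x, True)) | x. x \<in> I}"

definition split_flow :: "'v set \<Rightarrow> 'v set \<Rightarrow> ('v \<times> 'v \<Rightarrow> real) \<Rightarrow> ('v \<times> bool) \<times> ('v \<times> bool) \<Rightarrow> real" where
  "split_flow N I f a =
     (case a of ((x, True), (y, False)) \<Rightarrow> f (x, y)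
              | ((x, False), (y, True)) \<Rightarrow> if x = y \<and> x \<in> I then inflow N f x else 0
              | _ \<Rightarrow> 0)"

lemma sum_split_nodes:
  assumes "finite N"
  shows "(\<Sum>p\<in>split_nodes N. h p) = (\<Sum>u\<in>N. h (u, True)) + (\<Sum>u\<in>N. h (u, False))"
proof -
  have "(\<Sum>p\<in>split_nodes N. h p) = (\<Sum>u\<in>N. \<Sum>b\<in>UNIV. h (u, b))"
    unfolding split_nodes_def by (simp add: sum.cartesian_product)
  also have "\<dots> = (\<Sum>u\<in>N. h (u, True) + h (u, False))" by (simp add: UNIV_bool add.commute)
  finally show ?thesis by (simp add: sum.distrib)
qed

lemma split_arcs_simps [simp]:
  "((x, True), (y, False)) \<in> split_arcs E I \<longleftrightarrow> (x, y) \<in> E"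
  "((x, False), (y, True)) \<in> split_arcs E I \<longleftrightarrow> x = y \<and> x \<in> I"
  "((x, False), (y, False)) \<notin> split_arcs E I"
  "((x, True), (y, True)) \<notin> split_arcs E I"
  unfolding split_arcs_def by auto

lemma split_flow_simps [simp]:
  "split_flow N I f ((x, True), (y, False)) = f (x, y)"
  "split_flow N I f ((x, False), (y, True)) = (if x = y \<and> x \<in> I then inflow N f x else 0)"
  "split_flow N I f ((x, False), (y, False)) = 0"
  "split_flow N I f ((x, True), (y, True)) = 0"
  by (simp_all add: split_flow_def)

lemma sum_delta_conj:
  assumes "finite N" "x \<in> N"
  shows "(\<Sum>u\<in>N. if u = x \<and> P u then c u else (0::real)) = (if P x then c x else 0)"
proof -
  have "(\<Sum>u\<in>N. if u = x \<and> P u then c u else (0::real)) = (\<Sum>u\<in>N. if u = x then (if P x then c x else 0) else 0)"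
    by (rule sum.cong) auto
  then show ?thesis using assms by simp
qed

lemma split_flow_balance:
  assumes "finite N" "x \<in> N"
  shows "inflow (split_nodes N) (split_flow N I f) (x, False) = inflow N f x"
    and "outflow (split_nodes N) (split_flow N I f) (x, False) = (if x \<in> I then inflow N f x else 0)"
    and "inflow (split_nodes N) (split_flow N I f) (x, True) = (if x \<in> I then inflow N f x else 0)"
    and "outflow (split_nodes N) (split_flow N I f) (x, True) = outflow N f x"
proof -
  show "inflow (split_nodes N) (split_flow N I f) (x, False) = inflow N f x"
    using assms(1) by (simp add: inflow_def sum_split_nodes)
  show "outflow (split_nodes N) (split_flow N I f) (x, False) = (if x \<in> I then inflow N f x else 0)"
    using assms by (simp add: outflow_def sum_split_nodes sum_delta_conj[OF assms] eq_commute[of x])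
  show "inflow (split_nodes N) (split_flow N I f) (x, True) = (if x \<in> I then inflow N f x else 0)"
    using assms by (simp add: inflow_def sum_split_nodes sum_delta_conj[OF assms])
  show "outflow (split_nodes N) (split_flow N I f) (x, True) = outflow N f x"
    using assms(1) by (simp add: outflow_def sum_split_nodes)
qed

lemma split_flow_conservation:
  fixes s t :: 'v
  assumes N: "finite N" and flow: "st_flow N E s t f"
    and in_s: "inflow N f s = 0" and out_t: "outflow N f t = 0"
  defines "I \<equiv> N - {s, t}"
  assumes p: "p \<in> split_nodes N - {(s, True), (t, False)}"
  shows "inflow (split_nodes N) (split_flow N I f) p = outflow (split_nodes N) (split_flow N I f) p"
proof -
  obtain x b where pe: "p = (x, b)" and xN: "x \<in> N" using p by (auto simp: split_nodes_def)
  note bal = split_flow_balance[OF N xN]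
  have s_out: "s \<notin> I" and t_out: "t \<notin> I" by (simp_all add: I_def)
  show ?thesis
  proof (cases b)
    case False
    then have x: "x \<in> I \<or> x = s" and p_in: "p = (x, False)" using p pe xN by (auto simp: I_def)
    show ?thesis unfolding p_in using x bal(1,2) in_s s_out by auto
  next
    case True
    then have x: "x \<in> I \<or> x = t" and p_out: "p = (x, True)" using p pe xN by (auto simp: I_def)
    have "x \<in> I \<Longrightarrow> inflow N f x = outflow N f x" using flow unfolding st_flow_def I_def by auto
    then show ?thesis unfolding p_out using x bal(3,4) out_t t_out by auto
  qed
qed

lemma split_flow_node_cap:
  assumes N: "finite N" "s \<in> N" and f: "node_cap_flow N E s t f"
    and no_in: "\<And>u. (u, s) \<notin> E" and no_out: "\<And>w. (t, w) \<notin> E"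
  defines "I \<equiv> N - {s, t}"
  shows "st_flow (split_nodes N) (split_arcs E I) (s, True) (t, False) (split_flow N I f)"
    and "\<forall>a\<in>split_cap_arcs I. split_flow N I f a \<le> 1"
    and "flow_value (split_nodes N) (s, True) (split_flow N I f) = flow_value N s f"
proof -
  have flow: "st_flow N E s t f" and cap: "\<forall>x\<in>I. inflow N f x \<le> 1"
    using f unfolding node_cap_flow_def I_def by auto
  have in_s: "inflow N f s = 0"
    unfolding inflow_def by (intro sum.neutral ballI st_flow_outside[OF flow] no_in)
  have out_t: "outflow N f t = 0"
    unfolding outflow_def by (intro sum.neutral ballI st_flow_outside[OF flow] no_out)
  have in_nonneg: "0 \<le> inflow N f x" for x
    unfolding inflow_def by (intro sum_nonneg) (simp add: st_flow_nonneg[OF flow])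
  have support: "split_flow N I f a = 0" if outside: "a \<notin> split_arcs E I" for a
  proof -
    obtain x b y c where a: "a = ((x, b), (y, c))" by (metis prod.exhaust)
    show ?thesis using outside st_flow_outside[OF flow] unfolding a by (cases b; cases c) auto
  qed
  have nonneg: "0 \<le> split_flow N I f a" for a
  proof -
    obtain x b y c where a: "a = ((x, b), (y, c))" by (metis prod.exhaust)
    show ?thesis unfolding a by (cases b; cases c) (simp_all add: st_flow_nonneg[OF flow] in_nonneg)
  qed
  show "st_flow (split_nodes N) (split_arcs E I) (s, True) (t, False) (split_flow N I f)"
    unfolding st_flow_def using split_flow_conservation[OF N(1) flow in_s out_t, folded I_def] support nonneg
    by blast
  show "\<forall>a\<in>split_cap_arcs I. split_flow N I f a \<le> 1"
    using cap by (auto simp: split_cap_arcs_def)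
  show "flow_value (split_nodes N) (s, True) (split_flow N I f) = flow_value N s f"
    using split_flow_balance[OF N] in_s by (simp add: flow_value_def I_def)
qed

lemma unsplit_balance:
  assumes "finite N" "x \<in> N" and G: "\<And>a. a \<notin> split_arcs E I \<Longrightarrow> G a = 0"
  defines "g \<equiv> \<lambda>e. G ((fst e, True), (snd e, False))"
  shows "inflow (split_nodes N) G (x, False) = inflow N g x"
    and "outflow (split_nodes N) G (x, True) = outflow N g x"
    and "outflow (split_nodes N) G (x, False) = G ((x, False), (x, True))"
    and "inflow (split_nodes N) G (x, True) = G ((x, False), (x, True))"
proof -
  have FF: "G ((u, False), (w, False)) = 0" and TT: "G ((u, True), (w, True)) = 0" for u w
    by (simp_all add: G)
  have FT: "(\<Sum>u\<in>N. G ((u, False), (x, True))) = G ((x, False), (x, True))"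
    and TF: "(\<Sum>u\<in>N. G ((x, False), (u, True))) = G ((x, False), (x, True))"
  proof -
    have "(\<Sum>u\<in>N. G ((u, False), (x, True))) = (\<Sum>u\<in>N. if u = x then G ((x, False), (x, True)) else 0)"
      and "(\<Sum>u\<in>N. G ((x, False), (u, True))) = (\<Sum>u\<in>N. if u = x then G ((x, False), (x, True)) else 0)"
      by (auto intro!: sum.cong G)
    then show "(\<Sum>u\<in>N. G ((u, False), (x, True))) = G ((x, False), (x, True))"
      and "(\<Sum>u\<in>N. G ((x, False), (u, True))) = G ((x, False), (x, True))"
      using assms(1,2) by simp_all
  qed
  show "inflow (split_nodes N) G (x, False) = inflow N g x"
    using assms(1) by (simp add: inflow_def sum_split_nodes FF g_def)
  show "outflow (split_nodes N) G (x, True) = outflow N g x"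
    using assms(1) by (simp add: outflow_def sum_split_nodes TT g_def)
  show "outflow (split_nodes N) G (x, False) = G ((x, False), (x, True))"
    using assms(1) by (simp add: outflow_def sum_split_nodes FF TF)
  show "inflow (split_nodes N) G (x, True) = G ((x, False), (x, True))"
    using assms(1) by (simp add: inflow_def sum_split_nodes TT FT)
qed

lemma unsplit_node_cap:
  fixes s t :: 'v
  assumes N: "finite N" "s \<in> N" and no_in: "\<And>u. (u, s) \<notin> E"
  defines "I \<equiv> N - {s, t}"
  assumes G: "st_flow (split_nodes N) (split_arcs E I) (s, True) (t, False) G"
    and cap: "\<forall>a\<in>split_cap_arcs I. G a \<le> 1"
  defines "g \<equiv> \<lambda>e. G ((fst e, True), (snd e, False))"
  shows "node_cap_flow N E s t g" and "flow_value N s g = flow_value (split_nodes N) (s, True) G"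
proof -
  note bal = unsplit_balance[where G=G and E=E and I=I, OF N(1) _ st_flow_outside[OF G], folded g_def]
  have conservation: "inflow N g x = outflow N g x \<and> inflow N g x \<le> 1" if x: "x \<in> I" for x
  proof -
    have xN: "x \<in> N" using x by (simp add: I_def)
    have "(x, True) \<in> split_nodes N - {(s, True), (t, False)}" "(x, False) \<in> split_nodes N - {(s, True), (t, False)}"
      using x xN by (auto simp: split_nodes_def I_def)
    then have "inflow (split_nodes N) G (x, True) = outflow (split_nodes N) G (x, True)"
      "inflow (split_nodes N) G (x, False) = outflow (split_nodes N) G (x, False)"
      using G unfolding st_flow_def by blast+
    moreover have "G ((x, False), (x, True)) \<le> 1" using cap x by (auto simp: split_cap_arcs_def)
    ultimately show ?thesis using bal[OF xN] by simp
  qed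
  have "st_flow N E s t g"
    unfolding st_flow_def
  proof (intro conjI allI impI ballI)
    fix e show "0 \<le> g e" unfolding g_def by (rule st_flow_nonneg[OF G])
  next
    fix e assume "e \<notin> E"
    then show "g e = 0" unfolding g_def by (intro st_flow_outside[OF G]) (simp add: split_arcs_def)
  next
    fix x assume "x \<in> N - {s, t}"
    then show "inflow N g x = outflow N g x" using conservation unfolding I_def by blast
  qed
  then show "node_cap_flow N E s t g"
    unfolding node_cap_flow_def I_def[symmetric] using conservation by blast
  have "inflow N g s = 0"
    unfolding inflow_def g_def by (intro sum.neutral ballI st_flow_outside[OF G]) (simp add: no_in)
  moreover have "G ((s, False), (s, True)) = 0" by (rule st_flow_outside[OF G]) (simp add: I_def)
  ultimately show "flow_value N s g = flow_value (split_nodes N) (s, True) G"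
    using bal[OF N(2)] by (simp add: flow_value_def)
qed

lemma integral_node_cap_flow:
  assumes N: "finite N" "E \<subseteq> N \<times> N" "s \<in> N" "t \<in> N" "s \<noteq> t"
    and no_in: "\<And>u. (u, s) \<notin> E" and no_out: "\<And>w. (t, w) \<notin> E"
    and f: "node_cap_flow N E s t f"
  shows "\<exists>g. node_cap_flow N E s t g \<and> (\<forall>e. g e \<in> \<int>) \<and> flow_value N s f \<le> flow_value N s g"
proof -
  let ?I = "N - {s, t}"
  note split = split_flow_node_cap[OF N(1,3) f no_in no_out]
  have fin: "finite (split_nodes N)" using N(1) by (simp add: split_nodes_def)
  have arcs: "split_arcs E ?I \<subseteq> split_nodes N \<times> split_nodes N"
    using N(2) by (auto simp: split_arcs_def split_nodes_def)
  have src: "(s, True) \<in> split_nodes N" using N(3) by (simp add: split_nodes_def)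
  obtain G where G: "st_flow (split_nodes N) (split_arcs E ?I) (s, True) (t, False) G"
    "\<forall>a\<in>split_cap_arcs ?I. G a \<le> 1" "\<forall>a. G a \<in> \<int>"
    "flow_value (split_nodes N) (s, True) (split_flow N ?I f) \<le> flow_value (split_nodes N) (s, True) G"
    using integral_flow_exists[OF fin arcs src _ split(1,2)] by (metis Pair_inject)
  show ?thesis
    using unsplit_node_cap[OF N(1,3) no_in G(1,2)] G(3,4) split(3)
    by (intro exI[of _ "\<lambda>e. G ((fst e, True), (snd e, False))"]) auto
qed

abbreviation flow_arc :: "nat \<Rightarrow> (nat \<times> nat) set \<Rightarrow> (nat \<times> nat) set \<Rightarrow> fnode \<Rightarrow> fnode \<Rightarrow> bool" where
  "flow_arc m D B x y \<equiv> (x, y) \<in> flow_edges m D B"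

lemma finite_flow_nodes: "finite (flow_nodes m B)"
proof -
  have "flow_nodes m B \<subseteq> {Src, Snk} \<union> (\<lambda>(v, w). Lnd {v, w}) ` ({..<m} \<times> {..<m}) \<union>
      (\<lambda>(v, w). Rnd v w) ` ({..<m} \<times> {..<m})"
    unfolding flow_nodes_def by auto
  then show ?thesis by (rule finite_subset) auto
qed

lemma Src_in_flow_nodes: "Src \<in> flow_nodes m B"
  and Snk_in_flow_nodes: "Snk \<in> flow_nodes m B"
  by (auto simp: flow_nodes_def)

lemma flow_edges_subset:
  assumes "mixed_graph m D B"
  shows "flow_edges m D B \<subseteq> flow_nodes m B \<times> flow_nodes m B"
proof
  fix e assume "e \<in> flow_edges m D B"
  moreover have "D \<subseteq> {..<m} \<times> {..<m}" "B \<subseteq> {..<m} \<times> {..<m}"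
    using assms by (auto simp: mixed_graph_def)
  ultimately show "e \<in> flow_nodes m B \<times> flow_nodes m B"
    unfolding flow_edges_def flow_nodes_def pa_def by auto
qed

lemma flow_edge_from_Src:
  "(Src, z) \<in> flow_edges m D B \<longleftrightarrow> (\<exists>v w. z = Lnd {v, w} \<and> v < m \<and> w < m \<and> v \<noteq> w \<and> (v, w) \<notin> B)"
  by (auto simp: flow_edges_def)

lemma flow_edge_from_Lnd:
  "(Lnd S, z) \<in> flow_edges m D B \<longleftrightarrow> (\<exists>v w. S = {v, w} \<and> v < m \<and> w < m \<and> v \<noteq> w \<and> (v, w) \<notin> B \<and>
     (z = Rnd v w \<or> (\<exists>u. z = Rnd v u \<and> (w, u) \<in> B)))"
  by (auto simp: flow_edges_def)

lemma flow_edge_from_Rnd: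
  "(Rnd v x, z) \<in> flow_edges m D B \<longleftrightarrow> v < m \<and> ((\<exists>u. z = Rnd v u \<and> (x, u) \<in> D) \<or> (z = Snk \<and> x \<in> pa D v))"
  by (auto simp: flow_edges_def pa_def)

lemma no_flow_edge_from_Snk: "(Snk, z) \<notin> flow_edges m D B"
  and no_flow_edge_to_Src: "(z, Src) \<notin> flow_edges m D B"
  by (auto simp: flow_edges_def)

lemma is_flow_node_cap:
  "is_flow m D B f \<longleftrightarrow> node_cap_flow (flow_nodes m B) (flow_edges m D B) Src Snk f"
  unfolding is_flow_def node_cap_flow_def st_flow_def inflow_def outflow_def by auto

lemma flow_size_value:
  assumes "is_flow m D B f"
  shows "flow_size m B f = flow_value (flow_nodes m B) Src f"
proof -
  have "inflow (flow_nodes m B) f Src = 0"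
    using assms unfolding is_flow_def inflow_def by (simp add: no_flow_edge_to_Src)
  then show ?thesis by (simp add: flow_size_def flow_value_def outflow_def)
qed

lemma integral_flow:
  assumes "mixed_graph m D B" "is_flow m D B f"
  shows "\<exists>g. is_flow m D B g \<and> (\<forall>e. g e \<in> \<int>) \<and> flow_size m B f \<le> flow_size m B g"
proof -
  obtain g where g: "node_cap_flow (flow_nodes m B) (flow_edges m D B) Src Snk g" "\<forall>e. g e \<in> \<int>"
    "flow_value (flow_nodes m B) Src f \<le> flow_value (flow_nodes m B) Src g"
    using integral_node_cap_flow[OF finite_flow_nodes flow_edges_subset[OF assms(1)]
        Src_in_flow_nodes Snk_in_flow_nodes _ no_flow_edge_to_Src no_flow_edge_from_Snk]
      assms(2) unfolding is_flow_node_cap by blast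
  then have "is_flow m D B g" by (simp add: is_flow_node_cap)
  then show ?thesis using g(2,3) flow_size_value assms(2) by metis
qed

text \<open>Every flow is bounded by the number of nodes, so the maximum flow is a finite supremum.\<close>

lemma flow_size_bound:
  assumes "is_flow m D B f"
  shows "flow_size m B f \<le> real (card (flow_nodes m B))"
proof -
  let ?N = "flow_nodes m B"
  have "f (Src, w) \<le> 1" if w: "w \<in> ?N" for w
  proof (cases "w \<in> ?N - {Src, Snk}")
    case True
    have "f (Src, w) \<le> inflow ?N f w" unfolding inflow_def
      using assms by (intro member_le_sum) (auto simp: is_flow_def Src_in_flow_nodes finite_flow_nodes)
    also have "\<dots> \<le> 1" using assms True unfolding is_flow_def inflow_def by blast
    finally show ?thesis .
  next
    case False
    then have "(Src, w) \<notin> flow_edges m D B" using w by (auto simp: flow_edge_from_Src)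
    then show ?thesis using assms by (simp add: is_flow_def)
  qed
  then have "flow_size m B f \<le> (\<Sum>w\<in>?N. 1)" unfolding flow_size_def by (intro sum_mono) auto
  then show ?thesis by simp
qed

definition disjoint_flow_paths :: "nat \<Rightarrow> (nat \<times> nat) set \<Rightarrow> (nat \<times> nat) set \<Rightarrow> fnode list set \<Rightarrow> bool" where
  "disjoint_flow_paths m D B P \<longleftrightarrow> finite P \<and>
     (\<forall>ys\<in>P. rtrancl_path (flow_arc m D B) Src ys Snk \<and> distinct (Src # ys)) \<and>
     (\<forall>ys\<in>P. \<forall>zs\<in>P. ys \<noteq> zs \<longrightarrow> set ys \<inter> set zs \<subseteq> {Snk})"

text \<open>Every source-sink path visits a node other than the sink, since there is no arc from s to t.\<close>

lemma flow_path_inner_node: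
  assumes "rtrancl_path (flow_arc m D B) Src ys Snk"
  shows "\<exists>x\<in>set ys. x \<noteq> Snk"
  using assms by (cases rule: rtrancl_path.cases) (auto simp: flow_edge_from_Src)

lemma flow_path_nodes:
  assumes "mixed_graph m D B" "rtrancl_path (flow_arc m D B) Src ys Snk"
  shows "set ys \<subseteq> flow_nodes m B"
  using rtrancl_path_set[OF assms(2)] flow_edges_subset[OF assms(1)] by blast

text \<open>An integral flow of size at least k yields k internally disjoint paths: its path
  decomposition can use an inner node only once, by the node capacity 1.\<close>

lemma paths_of_integral_flow:
  assumes mg: "mixed_graph m D B" and g: "is_flow m D B g" "\<forall>e. g e \<in> \<int>"
    and k: "real k \<le> flow_size m B g"
  shows "\<exists>P. disjoint_flow_paths m D B P \<and> card P = k"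
proof -
  let ?N = "flow_nodes m B" and ?E = "flow_edges m D B"
  have flow: "st_flow ?N ?E Src Snk g" and cap: "\<forall>x\<in>?N - {Src, Snk}. inflow ?N g x \<le> 1"
    using g(1) unfolding is_flow_node_cap node_cap_flow_def by auto
  have "real k \<le> flow_value ?N Src g" using k flow_size_value[OF g(1)] by simp
  then obtain Ps where len: "length Ps = k"
    and paths: "\<forall>ys\<in>set Ps. rtrancl_path (flow_arc m D B) Src ys Snk \<and> distinct (Src # ys)"
    and below: "\<forall>a. (\<Sum>ys\<leftarrow>Ps. walk_flow along Src ys a) \<le> g a"
    using flow_path_decomposition[OF finite_flow_nodes flow_edges_subset[OF mg] Src_in_flow_nodes
        fnode.distinct(1) flow g(2)] by blast
  have once: "i = j" if ij: "i < k" "j < k" "x \<in> set (Ps ! i)" "x \<in> set (Ps ! j)" "x \<noteq> Snk" for i j x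
  proof -
    have on_paths: "\<forall>ys\<in>set Ps. distinct (Src # ys) \<and> set ys \<subseteq> ?N"
      using paths flow_path_nodes[OF mg] by blast
    have "Ps ! i \<in> set Ps" using ij(1) len by simp
    then have "x \<in> ?N - {Src, Snk}" using on_paths ij(3,5) by auto
    then show ?thesis
      using decomposition_node_once[OF finite_flow_nodes Src_in_flow_nodes on_paths below] cap ij len by auto
  qed
  have "distinct Ps"
    unfolding distinct_conv_nth
  proof (intro allI impI)
    fix i j assume ij: "i < length Ps" "j < length Ps" "i \<noteq> j"
    obtain x where "x \<in> set (Ps ! i)" "x \<noteq> Snk"
      using flow_path_inner_node paths ij(1) nth_mem by blast
    then show "Ps ! i \<noteq> Ps ! j" using once ij len by metis
  qed
  moreover have "\<forall>ys\<in>set Ps. \<forall>zs\<in>set Ps. ys \<noteq> zs \<longrightarrow> set ys \<inter> set zs \<subseteq> {Snk}"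
    using once len by (fastforce simp: in_set_conv_nth)
  ultimately show ?thesis
    using paths len distinct_card by (intro exI[of _ "set Ps"]) (auto simp: disjoint_flow_paths_def)
qed

lemma flow_of_paths:
  assumes mg: "mixed_graph m D B" and P: "disjoint_flow_paths m D B P"
  shows "\<exists>f. is_flow m D B f \<and> flow_size m B f = real (card P)"
proof -
  let ?N = "flow_nodes m B" and ?f = "\<lambda>a. \<Sum>ys\<in>P. walk_flow along Src ys a"
  have finP: "finite P" and paths: "\<And>ys. ys \<in> P \<Longrightarrow> rtrancl_path (flow_arc m D B) Src ys Snk \<and> distinct (Src # ys)"
    and disj: "\<And>ys zs x. ys \<in> P \<Longrightarrow> zs \<in> P \<Longrightarrow> x \<in> set ys \<Longrightarrow> x \<in> set zs \<Longrightarrow> x \<noteq> Snk \<Longrightarrow> ys = zs"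
    using P unfolding disjoint_flow_paths_def by blast+
  note sum_flow = path_sum_flow[OF finite_flow_nodes flow_edges_subset[OF mg] Src_in_flow_nodes
      fnode.distinct(1) finP paths]
  have "inflow ?N ?f x \<le> 1" if "x \<noteq> Snk" for x
  proof -
    have "card {ys \<in> P. x \<in> set ys} \<le> Suc 0"
      using finP disj that by (subst card_le_Suc0_iff_eq) auto
    then show ?thesis using sum_flow(3) by simp
  qed
  then have "is_flow m D B ?f"
    using sum_flow(1) unfolding is_flow_node_cap node_cap_flow_def by blast
  then show ?thesis using sum_flow(2) flow_size_value by metis
qed
lemma zero_is_flow: "is_flow m D B (\<lambda>_. 0)"
  by (simp add: is_flow_def)

lemma max_flow_paths:
  assumes mg: "mixed_graph m D B"
  shows "real k \<le> max_flow m D B \<longleftrightarrow> (\<exists>P. disjoint_flow_paths m D B P \<and> card P = k)"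
proof -
  define FS where "FS = {flow_size m B f | f. is_flow m D B f}"
  have max: "max_flow m D B = Sup FS" by (simp add: max_flow_def FS_def)
  have nonempty: "FS \<noteq> {}" using zero_is_flow unfolding FS_def by blast
  have bdd: "bdd_above FS" unfolding FS_def bdd_above_def using flow_size_bound by blast
  show ?thesis
  proof
    assume "real k \<le> max_flow m D B"
    then have "real k - 1 < Sup FS" using max by simp
    then obtain f where f: "is_flow m D B f" "real k - 1 < flow_size m B f"
      using less_cSupD[OF nonempty] unfolding FS_def by blast
    obtain g where g: "is_flow m D B g" "\<forall>e. g e \<in> \<int>" "flow_size m B f \<le> flow_size m B g"
      using integral_flow[OF mg f(1)] by blast
    have "flow_size m B g \<in> \<int>" unfolding flow_size_def using g(2) by (intro Ints_sum) auto
    then obtain z where z: "flow_size m B g = of_int z" by (auto elim: Ints_cases)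
    then have "int k \<le> z" using f(2) g(3) by linarith
    then have "real k \<le> flow_size m B g" using z by simp
    then show "\<exists>P. disjoint_flow_paths m D B P \<and> card P = k"
      using paths_of_integral_flow[OF mg g(1,2)] by blast
  next
    assume "\<exists>P. disjoint_flow_paths m D B P \<and> card P = k"
    then obtain f where "is_flow m D B f" "flow_size m B f = real k"
      using flow_of_paths[OF mg] by blast
    then have "real k \<in> FS" unfolding FS_def by force
    then show "real k \<le> max_flow m D B" using cSup_upper[OF _ bdd] max by simp
  qed
qed

lemma disjoint_flow_paths_meet:
  assumes "disjoint_flow_paths m D B P" "ys \<in> P" "zs \<in> P" "x \<in> set ys" "x \<in> set zs" "x \<noteq> Snk"
  shows "ys = zs"
  using assms unfolding disjoint_flow_paths_def by blast

definition layer_path :: "nat \<Rightarrow> nat \<Rightarrow> nat list \<Rightarrow> fnode list" where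
  "layer_path v y q = Lnd {v, y} # map (Rnd v) q @ [Snk]"

definition layer_walk :: "nat \<Rightarrow> (nat \<times> nat) set \<Rightarrow> (nat \<times> nat) set \<Rightarrow> nat \<Rightarrow> nat \<Rightarrow> nat list \<Rightarrow> bool" where
  "layer_walk m D B v y q \<longleftrightarrow> v < m \<and> y < m \<and> v \<noteq> y \<and> (v, y) \<notin> B \<and> q \<noteq> [] \<and>
     (hd q = y \<or> (y, hd q) \<in> B) \<and> successively (\<lambda>a b. (a, b) \<in> D) q \<and> last q \<in> pa D v"

lemma layer_tail_path_shape:
  "rtrancl_path (flow_arc m D B) (Rnd v x) zs Snk \<Longrightarrow>
   \<exists>q. zs = map (Rnd v) q @ [Snk] \<and> successively (\<lambda>a b. (a, b) \<in> D) (x # q) \<and> last (x # q) \<in> pa D v \<and> v < m"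
proof (induction zs arbitrary: x)
  case Nil
  then show ?case by (auto elim: rtrancl_path.cases)
next
  case (Cons z zs)
  from Cons.prems have e: "(Rnd v x, z) \<in> flow_edges m D B" and p: "rtrancl_path (flow_arc m D B) z zs Snk"
    by (auto elim: rtrancl_path.cases)
  from e have vm: "v < m" and step: "(\<exists>u. z = Rnd v u \<and> (x, u) \<in> D) \<or> (z = Snk \<and> x \<in> pa D v)"
    unfolding flow_edge_from_Rnd by auto
  from step show ?case
  proof
    assume "\<exists>u. z = Rnd v u \<and> (x, u) \<in> D"
    then obtain u where u: "z = Rnd v u" "(x, u) \<in> D" by blast
    from Cons.IH[of u] p u obtain q where "zs = map (Rnd v) q @ [Snk]"
      "successively (\<lambda>a b. (a, b) \<in> D) (u # q)" "last (u # q) \<in> pa D v" by auto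
    then show ?case using u vm by (intro exI[of _ "u # q"]) auto
  next
    assume z: "z = Snk \<and> x \<in> pa D v"
    then have "zs = []" using p by (auto elim: rtrancl_path.cases simp: no_flow_edge_from_Snk)
    then show ?case using z vm by (intro exI[of _ "[]"]) auto
  qed
qed

lemma layer_tail_path:
  assumes "successively (\<lambda>a b. (a, b) \<in> D) (x # q)" "last (x # q) \<in> pa D v" "v < m"
  shows "rtrancl_path (flow_arc m D B) (Rnd v x) (map (Rnd v) q @ [Snk]) Snk"
  using assms
proof (induction q arbitrary: x)
  case Nil
  then have "(Rnd v x, Snk) \<in> flow_edges m D B" by (simp add: flow_edge_from_Rnd)
  then show ?case by (simp add: rtrancl_path.step rtrancl_path.base)
next
  case (Cons y q)
  then have "(x, y) \<in> D" "successively (\<lambda>a b. (a, b) \<in> D) (y # q)" "last (y # q) \<in> pa D v" by auto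
  then have "rtrancl_path (flow_arc m D B) (Rnd v y) (map (Rnd v) q @ [Snk]) Snk"
    and "(Rnd v x, Rnd v y) \<in> flow_edges m D B"
    using Cons.IH Cons.prems(3) by (auto simp: flow_edge_from_Rnd)
  then show ?case by (simp add: rtrancl_path.step)
qed

lemma flow_path_shape:
  assumes path: "rtrancl_path (flow_arc m D B) Src ys Snk"
  shows "\<exists>v y q. ys = layer_path v y q \<and> layer_walk m D B v y q"
proof -
  obtain z zs where ys: "ys = z # zs" using path by (cases ys) (auto elim: rtrancl_path.cases)
  from path ys have e1: "(Src, z) \<in> flow_edges m D B" and p1: "rtrancl_path (flow_arc m D B) z zs Snk"
    by (auto elim: rtrancl_path.cases)
  from e1 obtain a b where z: "z = Lnd {a, b}" unfolding flow_edge_from_Src by auto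
  obtain z' zs' where zs: "zs = z' # zs'" using p1 z by (cases zs) (auto elim: rtrancl_path.cases)
  from p1 zs have e2: "(z, z') \<in> flow_edges m D B" and p2: "rtrancl_path (flow_arc m D B) z' zs' Snk"
    by (auto elim: rtrancl_path.cases)
  from e2 z have "\<exists>v w. {a, b} = {v, w} \<and> v < m \<and> w < m \<and> v \<noteq> w \<and> (v, w) \<notin> B \<and>
      (z' = Rnd v w \<or> (\<exists>u. z' = Rnd v u \<and> (w, u) \<in> B))"
    by (simp only: flow_edge_from_Lnd)
  then obtain v w where "{a, b} = {v, w} \<and> v < m \<and> w < m \<and> v \<noteq> w \<and> (v, w) \<notin> B \<and>
      (z' = Rnd v w \<or> (\<exists>u. z' = Rnd v u \<and> (w, u) \<in> B))"
    by (elim exE)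
  then have vw: "{a, b} = {v, w}" "v < m" "w < m" "v \<noteq> w" "(v, w) \<notin> B"
    "z' = Rnd v w \<or> (\<exists>u. z' = Rnd v u \<and> (w, u) \<in> B)"
    by simp_all
  then obtain x where x: "z' = Rnd v x" "x = w \<or> (w, x) \<in> B" by blast
  from layer_tail_path_shape[OF p2[unfolded x(1)]] obtain q where
    q: "zs' = map (Rnd v) q @ [Snk]" "successively (\<lambda>a b. (a, b) \<in> D) (x # q)" "last (x # q) \<in> pa D v"
    by blast
  have "ys = layer_path v w (x # q)" using ys z zs x(1) q(1) vw(1) by (simp add: layer_path_def)
  moreover have "layer_walk m D B v w (x # q)" using vw(2-5) x(2) q(2,3) by (auto simp: layer_walk_def)
  ultimately show ?thesis by blast
qed

lemma layer_path_flow_path: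
  assumes walk: "layer_walk m D B v y q"
  shows "rtrancl_path (flow_arc m D B) Src (layer_path v y q) Snk"
proof -
  obtain x q' where q: "q = x # q'" using walk by (cases q) (auto simp: layer_walk_def)
  have "successively (\<lambda>a b. (a, b) \<in> D) (x # q')" "last (x # q') \<in> pa D v" "v < m"
    using walk unfolding q layer_walk_def by simp_all
  then have "rtrancl_path (flow_arc m D B) (Rnd v x) (map (Rnd v) q' @ [Snk]) Snk"
    by (rule layer_tail_path)
  moreover have "(Lnd {v, y}, Rnd v x) \<in> flow_edges m D B" "(Src, Lnd {v, y}) \<in> flow_edges m D B"
    using walk unfolding q flow_edge_from_Lnd flow_edge_from_Src layer_walk_def by auto
  ultimately show ?thesis unfolding q layer_path_def by (simp add: rtrancl_path.step)
qed

definition path_layer :: "fnode list \<Rightarrow> nat" where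
  "path_layer ys = (case ys ! 1 of Rnd v _ \<Rightarrow> v | _ \<Rightarrow> 0)"

definition path_source :: "fnode list \<Rightarrow> nat" where
  "path_source ys = (case hd ys of Lnd S \<Rightarrow> the_elem (S - {path_layer ys}) | _ \<Rightarrow> 0)"

definition path_walk :: "fnode list \<Rightarrow> nat list" where
  "path_walk ys = map (\<lambda>z. case z of Rnd _ u \<Rightarrow> u | _ \<Rightarrow> 0) (butlast (tl ys))"

lemma decode_layer_path:
  assumes "q \<noteq> []" "v \<noteq> y"
  shows "path_layer (layer_path v y q) = v" "path_source (layer_path v y q) = y" "path_walk (layer_path v y q) = q"
proof -
  show layer: "path_layer (layer_path v y q) = v" using assms by (cases q) (auto simp: path_layer_def layer_path_def)
  have "{v, y} - {v} = {y}" using assms(2) by auto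
  then show "path_source (layer_path v y q) = y" using layer by (simp add: path_source_def layer_path_def)
  show "path_walk (layer_path v y q) = q" by (simp add: path_walk_def layer_path_def comp_def)
qed

lemma flow_path_decode:
  assumes "rtrancl_path (flow_arc m D B) Src ys Snk"
  shows "ys = layer_path (path_layer ys) (path_source ys) (path_walk ys)"
    and "layer_walk m D B (path_layer ys) (path_source ys) (path_walk ys)"
proof -
  obtain v y q where "ys = layer_path v y q" "layer_walk m D B v y q"
    using flow_path_shape[OF assms] by blast
  moreover from this(2) have "q \<noteq> []" "v \<noteq> y" by (simp_all add: layer_walk_def)
  ultimately show "ys = layer_path (path_layer ys) (path_source ys) (path_walk ys)"
    and "layer_walk m D B (path_layer ys) (path_source ys) (path_walk ys)"
    using decode_layer_path by simp_all
qed

lemma set_layer_path: "set (layer_path v y q) = insert (Lnd {v, y}) (insert Snk (Rnd v ` set q))"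
  by (auto simp: layer_path_def)

lemma distinct_layer_path: "distinct (Src # layer_path v y q) \<longleftrightarrow> distinct q"
  by (auto simp: layer_path_def distinct_map inj_on_def)

lemma flow_path_decoded_nodes:
  assumes "rtrancl_path (flow_arc m D B) Src ys Snk"
  shows "Lnd {path_layer ys, path_source ys} \<in> set ys"
    and "u \<in> set (path_walk ys) \<Longrightarrow> Rnd (path_layer ys) u \<in> set ys"
  using flow_path_decode(1)[OF assms] set_layer_path by (metis insertI1, metis image_eqI insertCI)

text \<open>A system of half-treks with no sided intersection is equivalently a
  finite set of half-treks with distinct sources, distinct targets and pairwise disjoint right
  sides; disjoint left sides are the same as distinct sources.\<close>

definition ht_set_system :: "(nat \<times> nat) set \<Rightarrow> (nat \<times> nat) set \<Rightarrow> nat set \<Rightarrow> nat set \<Rightarrow> half_trek set \<Rightarrow> bool" where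
  "ht_set_system D B X Y H \<longleftrightarrow> finite H \<and> (\<forall>h\<in>H. is_half_trek D B h) \<and>
     inj_on ht_source H \<and> inj_on ht_target H \<and> ht_source ` H = X \<and> ht_target ` H = Y \<and>
     (\<forall>h\<in>H. \<forall>h'\<in>H. h \<noteq> h' \<longrightarrow> ht_right h \<inter> ht_right h' = {})"

lemma ht_system_iff_set:
  "ht_system_no_sided D B X Y \<longleftrightarrow> (\<exists>H. ht_set_system D B X Y H)"
proof
  assume "ht_system_no_sided D B X Y"
  then obtain hs where hs: "\<forall>h\<in>set hs. is_half_trek D B h" "distinct (map ht_source hs)"
    "distinct (map ht_target hs)" "set (map ht_source hs) = X" "set (map ht_target hs) = Y"
    and sided: "\<forall>i<length hs. \<forall>j<length hs. i \<noteq> j \<longrightarrow> ht_right (hs ! i) \<inter> ht_right (hs ! j) = {}"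
    unfolding ht_system_no_sided_def by blast
  have "ht_right h \<inter> ht_right h' = {}" if hh: "h \<in> set hs" "h' \<in> set hs" "h \<noteq> h'" for h h'
  proof -
    obtain i j where "i < length hs" "j < length hs" "h = hs ! i" "h' = hs ! j"
      using hh(1,2) by (auto simp: in_set_conv_nth)
    then show ?thesis using sided hh(3) by blast
  qed
  then show "\<exists>H. ht_set_system D B X Y H"
    using hs unfolding ht_set_system_def by (intro exI[of _ "set hs"]) (simp add: distinct_map)
next
  assume "\<exists>H. ht_set_system D B X Y H"
  then obtain H where H: "finite H" "\<forall>h\<in>H. is_half_trek D B h" "inj_on ht_source H" "inj_on ht_target H"
    "ht_source ` H = X" "ht_target ` H = Y" "\<forall>h\<in>H. \<forall>h'\<in>H. h \<noteq> h' \<longrightarrow> ht_right h \<inter> ht_right h' = {}"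
    unfolding ht_set_system_def by blast
  obtain hs where hs: "set hs = H" "distinct hs" using finite_distinct_list[OF H(1)] by blast
  have "ht_left (hs ! i) \<inter> ht_left (hs ! j) = {} \<and> ht_right (hs ! i) \<inter> ht_right (hs ! j) = {}"
    if "i < length hs" "j < length hs" "i \<noteq> j" for i j
  proof -
    have "hs ! i \<noteq> hs ! j" "hs ! i \<in> H" "hs ! j \<in> H" using that hs by (auto simp: nth_eq_iff_index_eq)
    then have "ht_source (hs ! i) \<noteq> ht_source (hs ! j)" using H(3) by (auto simp: inj_on_def)
    then show ?thesis using H(7) \<open>hs ! i \<noteq> hs ! j\<close> \<open>hs ! i \<in> H\<close> \<open>hs ! j \<in> H\<close>
      by (simp add: ht_left_def ht_source_def)
  qed
  then show "ht_system_no_sided D B X Y"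
    unfolding ht_system_no_sided_def using H hs by (intro exI[of _ hs]) (auto simp: distinct_map)
qed

lemma ht_system_card:
  assumes "ht_system_no_sided D B X Y"
  shows "card X = card Y"
proof -
  obtain H where "inj_on ht_source H" "inj_on ht_target H" "ht_source ` H = X" "ht_target ` H = Y"
    using assms unfolding ht_system_iff_set ht_set_system_def by blast
  then show ?thesis using card_image by metis
qed

definition walk_half_trek :: "nat \<Rightarrow> nat list \<Rightarrow> half_trek" where
  "walk_half_trek y q = (hd q \<noteq> y, y, q)"

lemma walk_half_trek_simps [simp]:
  "ht_source (walk_half_trek y q) = y" "ht_target (walk_half_trek y q) = last q"
  "ht_right (walk_half_trek y q) = set q"
  by (simp_all add: walk_half_trek_def ht_source_def ht_target_def ht_right_def)

lemma layer_walk_half_trek: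
  "layer_walk m D B v y q \<Longrightarrow> is_half_trek D B (walk_half_trek y q)"
  by (auto simp: layer_walk_def is_half_trek_def walk_half_trek_def)

definition htc_family :: "nat \<Rightarrow> (nat \<times> nat) set \<Rightarrow> (nat \<times> nat) set \<Rightarrow> (nat \<Rightarrow> nat set) \<Rightarrow> bool" where
  "htc_family m D B Yf \<longleftrightarrow> (\<forall>v<m. Yf v \<subseteq> {..<m} \<and> HTC D B (Yf v) v) \<and>
     (\<forall>v<m. \<forall>w<m. v \<noteq> w \<longrightarrow> \<not> (v \<in> Yf w \<and> w \<in> Yf v))"

lemma HTC_infinite_to_one_iff: "HTC_infinite_to_one m D B \<longleftrightarrow> \<not> (\<exists>Yf. htc_family m D B Yf)"
proof -
  have family: "htc_family m D B Yf \<longleftrightarrow> \<not> ((\<forall>v<m. Yf v \<subseteq> {..<m}) \<longrightarrow> (\<exists>v<m. \<not> HTC D B (Yf v) v) \<or>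
      (\<exists>v<m. \<exists>w<m. v \<noteq> w \<and> v \<in> Yf w \<and> w \<in> Yf v))" for Yf
    unfolding htc_family_def by auto
  show ?thesis unfolding HTC_infinite_to_one_def not_ex by (simp only: family not_not)
qed

lemma card_edges_by_head:
  assumes "mixed_graph m D B"
  shows "card D = (\<Sum>v<m. card (pa D v))"
proof -
  have D: "D \<subseteq> {..<m} \<times> {..<m}" using assms by (simp add: mixed_graph_def)
  have D_eq: "D = (\<lambda>(v, w). (w, v)) ` Sigma {..<m} (pa D)" using D by (auto simp: pa_def image_iff)
  have "inj_on (\<lambda>(v, w). (w, v)) (Sigma {..<m} (pa D))" by (auto simp: inj_on_def)
  then have "card D = card (Sigma {..<m} (pa D))" by (subst D_eq) (rule card_image)
  also have "\<dots> = (\<Sum>v<m. card (pa D v))"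
    using D by (intro card_SigmaI) (auto intro: finite_subset[of _ "{..<m}"] simp: pa_def)
  finally show ?thesis .
qed

text \<open>Two internally disjoint paths in the same layer coincide as soon as they share their source
  (hence their L-node) or a node of their walks (hence an R-node).\<close>

lemma layer_paths_unique:
  assumes P: "disjoint_flow_paths m D B P" and ys: "ys \<in> P" and zs: "zs \<in> P"
    and layer: "path_layer ys = path_layer zs"
  shows "path_source ys = path_source zs \<Longrightarrow> ys = zs"
    and "u \<in> set (path_walk ys) \<Longrightarrow> u \<in> set (path_walk zs) \<Longrightarrow> ys = zs"
proof -
  have paths: "\<And>ys. ys \<in> P \<Longrightarrow> rtrancl_path (flow_arc m D B) Src ys Snk"
    using P unfolding disjoint_flow_paths_def by blast
  note nodes = flow_path_decoded_nodes[OF paths] and meet = disjoint_flow_paths_meet[OF P ys zs]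
  show "ys = zs" if "path_source ys = path_source zs"
    using nodes(1)[OF ys] nodes(1)[OF zs] layer that meet by simp
  show "ys = zs" if "u \<in> set (path_walk ys)" "u \<in> set (path_walk zs)"
    using nodes(2)[OF ys that(1)] nodes(2)[OF zs that(2)] layer meet by simp
qed

text \<open>The edge w -> v of G whose sink node R_v(w) the path enters.\<close>

definition path_edge :: "fnode list \<Rightarrow> nat \<times> nat" where
  "path_edge ys = (last (path_walk ys), path_layer ys)"

lemma path_edges_bij:
  assumes mg: "mixed_graph m D B" and P: "disjoint_flow_paths m D B P" and card: "card P = card D"
  shows "bij_betw path_edge P D"
proof -
  have walk: "\<And>ys. ys \<in> P \<Longrightarrow> layer_walk m D B (path_layer ys) (path_source ys) (path_walk ys)"
    using P flow_path_decode(2) unfolding disjoint_flow_paths_def by blast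
  have "path_edge ` P \<subseteq> D"
    using walk by (auto simp: path_edge_def layer_walk_def pa_def)
  moreover have inj: "inj_on path_edge P"
  proof (rule inj_onI)
    fix ys zs assume ys: "ys \<in> P" and zs: "zs \<in> P" and eq: "path_edge ys = path_edge zs"
    have "last (path_walk ys) \<in> set (path_walk ys)" "last (path_walk zs) \<in> set (path_walk zs)"
      using walk ys zs by (auto simp: layer_walk_def)
    then show "ys = zs" using layer_paths_unique(2)[OF P ys zs] eq by (simp add: path_edge_def)
  qed
  moreover have "finite D" using mg finite_subset unfolding mixed_graph_def by blast
  ultimately have "path_edge ` P = D"
    using card card_image[OF inj] by (intro card_subset_eq) auto
  then show ?thesis using inj by (simp add: bij_betw_def)
qed

lemma layer_ht_system:
  fixes v :: nat
  assumes P: "disjoint_flow_paths m D B P" and bij: "bij_betw path_edge P D"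
  defines "Pv \<equiv> {ys \<in> P. path_layer ys = v}"
  shows "ht_system_no_sided D B (path_source ` Pv) (pa D v)"
proof -
  have "finite P" and walk: "\<And>ys. ys \<in> P \<Longrightarrow> layer_walk m D B (path_layer ys) (path_source ys) (path_walk ys)"
    using P flow_path_decode(2) unfolding disjoint_flow_paths_def by blast+
  have unique: "ys = zs" if "ys \<in> Pv" "zs \<in> Pv" "path_source ys = path_source zs \<or>
      (\<exists>u. u \<in> set (path_walk ys) \<and> u \<in> set (path_walk zs))" for ys zs
    using that layer_paths_unique[OF P] by (auto simp: Pv_def)
  define hk where "hk ys = walk_half_trek (path_source ys) (path_walk ys)" for ys
  have src_inj: "inj_on (ht_source \<circ> hk) Pv" using unique by (auto simp: inj_on_def hk_def)
  have tgt_inj: "inj_on (ht_target \<circ> hk) Pv"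
    using bij_betw_imp_inj_on[OF bij] by (auto simp: inj_on_def Pv_def hk_def path_edge_def)
  have tgt_img: "ht_target ` hk ` Pv = pa D v"
  proof -
    have "ht_target ` hk ` Pv = {w. (w, v) \<in> path_edge ` P}"
      by (auto simp: Pv_def hk_def path_edge_def image_iff)
    then show ?thesis using bij by (simp add: bij_betw_def pa_def)
  qed
  have right: "ht_right h \<inter> ht_right h' = {}" if hh: "h \<in> hk ` Pv" "h' \<in> hk ` Pv" "h \<noteq> h'" for h h'
  proof -
    obtain ys zs where ys: "ys \<in> Pv" "h = hk ys" and zs: "zs \<in> Pv" "h' = hk zs" using hh(1,2) by blast
    then have "ys \<noteq> zs" using hh(3) by blast
    then show ?thesis using unique[OF ys(1) zs(1)] ys(2) zs(2) by (auto simp: hk_def)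
  qed
  have "ht_set_system D B (path_source ` Pv) (pa D v) (hk ` Pv)"
    unfolding ht_set_system_def
  proof (intro conjI)
    show "finite (hk ` Pv)" using \<open>finite P\<close> by (simp add: Pv_def)
    show "\<forall>h\<in>hk ` Pv. is_half_trek D B h"
      using walk by (auto simp: Pv_def hk_def intro: layer_walk_half_trek)
    show "inj_on ht_source (hk ` Pv)" using src_inj by (rule inj_on_imageI)
    show "inj_on ht_target (hk ` Pv)" using tgt_inj by (rule inj_on_imageI)
    show "ht_source ` hk ` Pv = path_source ` Pv" by (simp add: image_image hk_def)
    show "ht_target ` hk ` Pv = pa D v" by (rule tgt_img)
    show "\<forall>h\<in>hk ` Pv. \<forall>h'\<in>hk ` Pv. h \<noteq> h' \<longrightarrow> ht_right h \<inter> ht_right h' = {}" using right by blast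
  qed
  then show ?thesis unfolding ht_system_iff_set by blast
qed

lemma family_of_paths:
  assumes mg: "mixed_graph m D B" and P: "disjoint_flow_paths m D B P" and card: "card P = card D"
  shows "\<exists>Yf. htc_family m D B Yf"
proof -
  have paths: "\<And>ys. ys \<in> P \<Longrightarrow> rtrancl_path (flow_arc m D B) Src ys Snk"
    using P unfolding disjoint_flow_paths_def by blast
  note walk = flow_path_decode(2)[OF paths]
  define Yf where "Yf v = path_source ` {ys \<in> P. path_layer ys = v}" for v
  have system: "ht_system_no_sided D B (Yf v) (pa D v)" for v
    unfolding Yf_def using layer_ht_system[OF P path_edges_bij[OF mg P card]] .
  have source: "y < m \<and> y \<noteq> v \<and> y \<notin> sib B v" if y: "y \<in> Yf v" for y v
  proof -
    obtain ys where ys: "ys \<in> P" "path_layer ys = v" "path_source ys = y" using y by (auto simp: Yf_def)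
    have "layer_walk m D B v y (path_walk ys)" using walk[OF ys(1)] ys(2,3) by simp
    then have "y < m" "y \<noteq> v" "(v, y) \<notin> B" by (auto simp: layer_walk_def)
    moreover have "sym B" using mg by (simp add: mixed_graph_def)
    ultimately show ?thesis by (auto simp: sib_def dest: symD)
  qed
  have "HTC D B (Yf v) v" for v
    using system[of v] ht_system_card[OF system] source by (auto simp: HTC_def)
  moreover have "\<not> (v \<in> Yf w \<and> w \<in> Yf v)" if "v \<noteq> w" for v w
  proof
    assume "v \<in> Yf w \<and> w \<in> Yf v"
    then obtain ys zs where ys: "ys \<in> P" "path_layer ys = w" "path_source ys = v"
      and zs: "zs \<in> P" "path_layer zs = v" "path_source zs = w"
      by (auto simp: Yf_def)
    have "Lnd {w, v} \<in> set ys" "Lnd {w, v} \<in> set zs"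
      using flow_path_decoded_nodes(1)[OF paths] ys zs by (metis insert_commute)+
    then have "ys = zs" using disjoint_flow_paths_meet[OF P ys(1) zs(1)] by simp
    then show False using ys zs \<open>v \<noteq> w\<close> by simp
  qed
  ultimately have "htc_family m D B Yf" using source unfolding htc_family_def by blast
  then show ?thesis by blast
qed

lemma successively_rtrancl_path: "successively r (x # xs) \<Longrightarrow> rtrancl_path r x xs (last (x # xs))"
  by (induction xs arbitrary: x) (auto intro: rtrancl_path.intros)

lemma rtrancl_path_successively: "rtrancl_path r x xs z \<Longrightarrow> successively r (x # xs)"
  by (induction rule: rtrancl_path.induct) (auto simp: successively_Cons elim: rtrancl_path.cases)

text \<open>Every walk contains a simple walk with the same ends; half-treks may repeat nodes, paths in
  G_flow may not.\<close>

lemma simple_subwalk: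
  assumes "p \<noteq> []" "successively r p"
  shows "\<exists>p'. p' \<noteq> [] \<and> hd p' = hd p \<and> last p' = last p \<and> set p' \<subseteq> set p \<and> distinct p' \<and> successively r p'"
proof -
  obtain x xs where p: "p = x # xs" using assms(1) by (cases p) auto
  then have "rtrancl_path r x xs (last p)" using successively_rtrancl_path assms(2) by metis
  then obtain xs' where xs': "rtrancl_path r x xs' (last p)" "distinct (x # xs')" "set xs' \<subseteq> set xs"
    by (rule rtrancl_path_distinct)
  show ?thesis
    using xs' rtrancl_path_last_cons[OF xs'(1)] rtrancl_path_successively[OF xs'(1)] p
    by (intro exI[of _ "x # xs'"]) auto
qed

definition shortcut :: "('a \<Rightarrow> 'a \<Rightarrow> bool) \<Rightarrow> 'a list \<Rightarrow> 'a list" where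
  "shortcut r p = (SOME p'. p' \<noteq> [] \<and> hd p' = hd p \<and> last p' = last p \<and> set p' \<subseteq> set p \<and> distinct p' \<and>
      successively r p')"

lemma shortcut:
  assumes "p \<noteq> []" "successively r p"
  shows "shortcut r p \<noteq> []" "hd (shortcut r p) = hd p" "last (shortcut r p) = last p"
    "set (shortcut r p) \<subseteq> set p" "distinct (shortcut r p)" "successively r (shortcut r p)"
  using someI_ex[OF simple_subwalk[OF assms]] unfolding shortcut_def by blast+

definition half_trek_systems :: "nat \<Rightarrow> (nat \<times> nat) set \<Rightarrow> (nat \<times> nat) set \<Rightarrow> (nat \<Rightarrow> nat set) \<Rightarrow> (nat \<Rightarrow> half_trek set) \<Rightarrow> bool" where
  "half_trek_systems m D B Yf H \<longleftrightarrow> (\<forall>v<m. ht_set_system D B (Yf v) (pa D v) (H v))"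

lemma half_trek_systems_exist:
  assumes "htc_family m D B Yf"
  shows "\<exists>H. half_trek_systems m D B Yf H"
proof -
  have "\<forall>v. \<exists>H. v < m \<longrightarrow> ht_set_system D B (Yf v) (pa D v) H"
    using assms unfolding htc_family_def HTC_def ht_system_iff_set by blast
  from choice[OF this] show ?thesis unfolding half_trek_systems_def by blast
qed

definition half_trek_path :: "(nat \<times> nat) set \<Rightarrow> nat \<Rightarrow> half_trek \<Rightarrow> fnode list" where
  "half_trek_path D v h = layer_path v (ht_source h) (shortcut (\<lambda>a b. (a, b) \<in> D) (snd (snd h)))"

lemma half_trek_path_layer_walk:
  assumes mg: "mixed_graph m D B" and fam: "htc_family m D B Yf" and H: "half_trek_systems m D B Yf H"
    and h: "v < m" "h \<in> H v"
  shows "layer_walk m D B v (ht_source h) (shortcut (\<lambda>a b. (a, b) \<in> D) (snd (snd h)))"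
    and "set (shortcut (\<lambda>a b. (a, b) \<in> D) (snd (snd h))) \<subseteq> ht_right h"
    and "distinct (shortcut (\<lambda>a b. (a, b) \<in> D) (snd (snd h)))"
proof -
  obtain b y p where hp: "h = (b, y, p)" by (cases h) auto
  have "ht_set_system D B (Yf v) (pa D v) (H v)" using H h(1) by (simp add: half_trek_systems_def)
  then have trek: "is_half_trek D B h" and "ht_source h \<in> Yf v" "ht_target h \<in> pa D v"
    using h(2) unfolding ht_set_system_def by blast+
  then have y: "y \<in> Yf v" and tgt: "last p \<in> pa D v" using hp by (simp_all add: ht_source_def ht_target_def)
  have "Yf v \<subseteq> {..<m}" "HTC D B (Yf v) v" using fam h(1) by (simp_all add: htc_family_def)
  then have "y < m" "y \<noteq> v" "y \<notin> sib B v" using y unfolding HTC_def by auto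
  moreover have "sym B" using mg by (simp add: mixed_graph_def)
  ultimately have "y < m" "y \<noteq> v" "(v, y) \<notin> B" by (auto simp: sib_def dest: symD)
  moreover have p: "p \<noteq> []" "successively (\<lambda>a b. (a, b) \<in> D) p" "hd p = y \<or> (y, hd p) \<in> B"
    using trek hp by (auto simp: is_half_trek_def split: if_splits)
  ultimately show "layer_walk m D B v (ht_source h) (shortcut (\<lambda>a b. (a, b) \<in> D) (snd (snd h)))"
    using shortcut[OF p(1,2)] h(1) tgt hp by (simp add: layer_walk_def ht_source_def)
  show "set (shortcut (\<lambda>a b. (a, b) \<in> D) (snd (snd h))) \<subseteq> ht_right h"
    using shortcut(4)[OF p(1,2)] hp by (simp add: ht_right_def)
  show "distinct (shortcut (\<lambda>a b. (a, b) \<in> D) (snd (snd h)))"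
    using shortcut(5)[OF p(1,2)] hp by simp
qed

text \<open>Paths of different half-treks are internally disjoint: at L-nodes by distinct sources and
  the exclusion of pairs v in Y_w, w in Y_v, at R-nodes by disjoint right sides.\<close>

lemma half_trek_paths_meet:
  assumes mg: "mixed_graph m D B" and fam: "htc_family m D B Yf" and H: "half_trek_systems m D B Yf H"
    and h: "v < m" "h \<in> H v" and h': "v' < m" "h' \<in> H v'"
    and x: "x \<in> set (half_trek_path D v h)" "x \<in> set (half_trek_path D v' h')" "x \<noteq> Snk"
  shows "v = v' \<and> h = h'"
proof -
  note walk = half_trek_path_layer_walk[OF mg fam H h] and walk' = half_trek_path_layer_walk[OF mg fam H h']
  have sys: "inj_on ht_source (H v)" "\<forall>g\<in>H v. \<forall>g'\<in>H v. g \<noteq> g' \<longrightarrow> ht_right g \<inter> ht_right g' = {}"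
    using H h(1) unfolding half_trek_systems_def ht_set_system_def by blast+
  have src: "ht_source h \<in> Yf v" "ht_source h' \<in> Yf v'"
    using H h h' unfolding half_trek_systems_def ht_set_system_def by blast+
  have no_mutual: "\<not> (v \<in> Yf v' \<and> v' \<in> Yf v)" if "v \<noteq> v'"
    using fam h(1) h'(1) that unfolding htc_family_def by blast
  have x1: "x = Lnd {v, ht_source h} \<or> (\<exists>u\<in>ht_right h. x = Rnd v u)"
    using x(1,3) walk(2) by (auto simp: half_trek_path_def set_layer_path)
  have x2: "x = Lnd {v', ht_source h'} \<or> (\<exists>u\<in>ht_right h'. x = Rnd v' u)"
    using x(2,3) walk'(2) by (auto simp: half_trek_path_def set_layer_path)
  show ?thesis
  proof (cases x)
    case (Lnd S)
    then have pair: "{v, ht_source h} = {v', ht_source h'}" using x1 x2 by auto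
    have "ht_source h \<noteq> v" "ht_source h' \<noteq> v'" using walk(1) walk'(1) by (simp_all add: layer_walk_def)
    show ?thesis
    proof (cases "v = v'")
      case True
      then have "ht_source h = ht_source h'" using pair \<open>ht_source h \<noteq> v\<close> by (auto simp: doubleton_eq_iff)
      then show ?thesis using inj_onD[OF sys(1) _ h(2)] h'(2) True by simp
    next
      case False
      then have "v = ht_source h'" "v' = ht_source h" using pair by (auto simp: doubleton_eq_iff)
      then show ?thesis using src no_mutual[OF False] by simp
    qed
  next
    case (Rnd a u)
    then have "v = v'" "u \<in> ht_right h" "u \<in> ht_right h'" using x1 x2 by auto
    then show ?thesis using sys(2) h(2) h'(2) by blast
  qed (use x1 in auto)
qed

lemma paths_of_family:
  assumes mg: "mixed_graph m D B" and fam: "htc_family m D B Yf"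
  shows "\<exists>P. disjoint_flow_paths m D B P \<and> card P = card D"
proof -
  obtain H where H: "half_trek_systems m D B Yf H" using half_trek_systems_exist[OF fam] by blast
  define S where "S = Sigma {..<m} H"
  define route where "route = (\<lambda>(v, h). half_trek_path D v h)"
  have sys: "finite (H v)" "inj_on ht_target (H v)" "ht_target ` H v = pa D v" if "v < m" for v
    using H that unfolding half_trek_systems_def ht_set_system_def by blast+
  have meet: "i = j" if ij: "i \<in> S" "j \<in> S" "x \<in> set (route i)" "x \<in> set (route j)" "x \<noteq> Snk" for i j x
  proof -
    obtain v h v' h' where "i = (v, h)" "j = (v', h')" "v < m" "h \<in> H v" "v' < m" "h' \<in> H v'"
      using ij(1,2) by (auto simp: S_def)
    then show ?thesis using half_trek_paths_meet[OF mg fam H, of v h v' h' x] ij(3-5) by (simp add: route_def)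
  qed
  have flow_path: "rtrancl_path (flow_arc m D B) Src (route i) Snk \<and> distinct (Src # route i)" if iS: "i \<in> S" for i
  proof -
    obtain v h where i: "i = (v, h)" "v < m" "h \<in> H v" using iS by (auto simp: S_def)
    note walk = half_trek_path_layer_walk(1,3)[OF mg fam H i(2,3)]
    have "route i = layer_path v (ht_source h) (shortcut (\<lambda>a b. (a, b) \<in> D) (snd (snd h)))"
      by (simp add: i(1) route_def half_trek_path_def)
    then show ?thesis using walk layer_path_flow_path distinct_layer_path by metis
  qed
  have inj: "inj_on route S"
  proof (rule inj_onI)
    fix i j assume ij: "i \<in> S" "j \<in> S" "route i = route j"
    obtain x where "x \<in> set (route i)" "x \<noteq> Snk" using flow_path_inner_node flow_path ij(1) by blast
    then show "i = j" using meet ij by simp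
  qed
  have "card S = (\<Sum>v<m. card (H v))" unfolding S_def using sys by (intro card_SigmaI) auto
  also have "\<dots> = (\<Sum>v<m. card (pa D v))" using sys card_image by (intro sum.cong) fastforce+
  also have "\<dots> = card D" using card_edges_by_head[OF mg] by simp
  finally have "card (route ` S) = card D" using card_image[OF inj] by simp
  moreover have "finite S" unfolding S_def using sys by auto
  then have "disjoint_flow_paths m D B (route ` S)"
    unfolding disjoint_flow_paths_def
  proof (intro conjI)
    show "\<forall>ys\<in>route ` S. rtrancl_path (flow_arc m D B) Src ys Snk \<and> distinct (Src # ys)"
      using flow_path by blast
    show "\<forall>ys\<in>route ` S. \<forall>zs\<in>route ` S. ys \<noteq> zs \<longrightarrow> set ys \<inter> set zs \<subseteq> {Snk}"
    proof (intro ballI impI subsetI)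
      fix ys zs x assume "ys \<in> route ` S" "zs \<in> route ` S" "ys \<noteq> zs" "x \<in> set ys \<inter> set zs"
      then show "x \<in> {Snk}" using meet by blast
    qed
  qed simp
  ultimately show ?thesis by blast
qed

theorem mainTheorem10:
  fixes m :: nat and D B :: "(nat \<times> nat) set"
  assumes "mixed_graph m D B"
  shows "HTC_infinite_to_one m D B \<longleftrightarrow> max_flow m D B < real (card D)"
proof -
  have "(\<exists>Yf. htc_family m D B Yf) \<longleftrightarrow> (\<exists>P. disjoint_flow_paths m D B P \<and> card P = card D)"
    using family_of_paths[OF assms] paths_of_family[OF assms] by blast
  also have "\<dots> \<longleftrightarrow> real (card D) \<le> max_flow m D B"
    using max_flow_paths[OF assms] by simp
  finally show ?thesis unfolding HTC_infinite_to_one_iff by (simp add: not_le)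
qed

end
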